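(* Let $(\mathcal{E},\mathcal{M})$ be an orthogonal factorization system on a category $\mathcal{D}$ with pullbacks, and let $\mathcal{A}$ be a category with a terminal object $1$. Let $\mathcal{E}'$ be the class of natural transformations $e$ between functors $\mathcal{A}\to\mathcal{D}$ such that $e_1\in\mathcal{E}$, and let $\mathcal{M}'$ be the class of cartesian natural transformations $m$ between functors $\mathcal{A}\to\mathcal{D}$ such that $m_1\in\mathcal{M}$. Then $(\mathcal{E}',\mathcal{M}')$ is an orthogonal factorization system on the functor category $[\mathcal{A},\mathcal{D}]$. Moreover, for every functor $G:\mathcal{A}\to\mathcal{D}$ there is an equivalence of categories $\mathcal{M}'/G \simeq \mathcal{M}/G1$.
   Context: An orthogonal factorization system $(\mathcal{E},\mathcal{M})$ on a category: both classes contain all isomorphisms and are closed under composition; for every commuting square $g\circ e = m\circ f$ with $e\in\mathcal{E}$, $m\in\mathcal{M}$ there is a unique $d$ with $d\circ e=f$ and $m\circ d=g$; every morphism factors as $m\circ e$ with $e\in\mathcal{E}$, $m\in\mathcal{M}$. A natural transformation is cartesian if all its naturality squares are pullbacks. For a class $\mathcal{N}$ of morphisms and an object $X$, $\mathcal{N}/X$ denotes the category whose objects are pairs $(S,s)$ with $s:S\to X$ in $\mathcal{N}$, and whose morphisms $(S,s)\to(S',s')$ are morphisms $f:S\to S'$ with $s'\circ f = s$. *)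

theory Defs
  imports Main
begin

record ('o, 'a) category =
  cobj  :: "'o set"
  carr  :: "'a set"
  cdom  :: "'a \<Rightarrow> 'o"
  ccod  :: "'a \<Rightarrow> 'o"
  cid   :: "'o \<Rightarrow> 'a"
  ccomp :: "'a \<Rightarrow> 'a \<Rightarrow> 'a"   (* ccomp C g f = g o f *)

definition is_category :: "('o, 'a) category \<Rightarrow> bool" where
  "is_category C \<longleftrightarrow>
     (\<forall>f\<in>carr C. cdom C f \<in> cobj C \<and> ccod C f \<in> cobj C) \<and>
     (\<forall>x\<in>cobj C. cid C x \<in> carr C \<and> cdom C (cid C x) = x \<and> ccod C (cid C x) = x) \<and>
     (\<forall>f\<in>carr C. \<forall>g\<in>carr C. ccod C f = cdom C g \<longrightarrow>
        ccomp C g f \<in> carr C \<and> cdom C (ccomp C g f) = cdom C f \<and> ccod C (ccomp C g f) = ccod C g) \<and>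
     (\<forall>f\<in>carr C. ccomp C (cid C (ccod C f)) f = f \<and> ccomp C f (cid C (cdom C f)) = f) \<and>
     (\<forall>f\<in>carr C. \<forall>g\<in>carr C. \<forall>h\<in>carr C. ccod C f = cdom C g \<and> ccod C g = cdom C h \<longrightarrow>
        ccomp C h (ccomp C g f) = ccomp C (ccomp C h g) f)"

definition is_iso :: "('o, 'a) category \<Rightarrow> 'a \<Rightarrow> bool" where
  "is_iso C f \<longleftrightarrow> f \<in> carr C \<and>
     (\<exists>g\<in>carr C. cdom C g = ccod C f \<and> ccod C g = cdom C f \<and>
        ccomp C g f = cid C (cdom C f) \<and> ccomp C f g = cid C (ccod C f))"

definition is_terminal :: "('o, 'a) category \<Rightarrow> 'o \<Rightarrow> bool" where
  "is_terminal C t \<longleftrightarrow> t \<in> cobj C \<and>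
     (\<forall>x\<in>cobj C. \<exists>!f. f \<in> carr C \<and> cdom C f = x \<and> ccod C f = t)"

definition is_pullback :: "('o, 'a) category \<Rightarrow> 'a \<Rightarrow> 'a \<Rightarrow> 'a \<Rightarrow> 'a \<Rightarrow> bool" where
  "is_pullback C f g p q \<longleftrightarrow>
     f \<in> carr C \<and> g \<in> carr C \<and> p \<in> carr C \<and> q \<in> carr C \<and>
     ccod C f = ccod C g \<and> cdom C p = cdom C q \<and>
     ccod C p = cdom C f \<and> ccod C q = cdom C g \<and>
     ccomp C f p = ccomp C g q \<and>
     (\<forall>a\<in>carr C. \<forall>b\<in>carr C.
        cdom C a = cdom C b \<and> ccod C a = cdom C f \<and> ccod C b = cdom C g \<and>
        ccomp C f a = ccomp C g b \<longrightarrow>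
        (\<exists>!u. u \<in> carr C \<and> cdom C u = cdom C a \<and> ccod C u = cdom C p \<and>
               ccomp C p u = a \<and> ccomp C q u = b))"

definition has_pullbacks :: "('o, 'a) category \<Rightarrow> bool" where
  "has_pullbacks C \<longleftrightarrow>
     (\<forall>f\<in>carr C. \<forall>g\<in>carr C. ccod C f = ccod C g \<longrightarrow> (\<exists>p q. is_pullback C f g p q))"

definition is_ofs :: "('o, 'a) category \<Rightarrow> 'a set \<Rightarrow> 'a set \<Rightarrow> bool" where
  "is_ofs C E M \<longleftrightarrow>
     E \<subseteq> carr C \<and> M \<subseteq> carr C \<and>
     (\<forall>f. is_iso C f \<longrightarrow> f \<in> E \<and> f \<in> M) \<and>
     (\<forall>f\<in>E. \<forall>g\<in>E. ccod C f = cdom C g \<longrightarrow> ccomp C g f \<in> E) \<and>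
     (\<forall>f\<in>M. \<forall>g\<in>M. ccod C f = cdom C g \<longrightarrow> ccomp C g f \<in> M) \<and>
     (\<forall>e\<in>E. \<forall>m\<in>M. \<forall>f\<in>carr C. \<forall>g\<in>carr C.
        cdom C f = cdom C e \<and> ccod C f = cdom C m \<and>
        cdom C g = ccod C e \<and> ccod C g = ccod C m \<and>
        ccomp C g e = ccomp C m f \<longrightarrow>
        (\<exists>!d. d \<in> carr C \<and> cdom C d = ccod C e \<and> ccod C d = cdom C m \<and>
               ccomp C d e = f \<and> ccomp C m d = g)) \<and>
     (\<forall>h\<in>carr C. \<exists>e\<in>E. \<exists>m\<in>M. ccod C e = cdom C m \<and> ccomp C m e = h)"

text \<open>Functor conditions on raw object/arrow maps (only values on the carriers matter).\<close>
definition functor_maps ::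
  "('o1, 'a1) category \<Rightarrow> ('o2, 'a2) category \<Rightarrow> ('o1 \<Rightarrow> 'o2) \<Rightarrow> ('a1 \<Rightarrow> 'a2) \<Rightarrow> bool" where
  "functor_maps C D Fo Fa \<longleftrightarrow>
     (\<forall>x\<in>cobj C. Fo x \<in> cobj D) \<and>
     (\<forall>f\<in>carr C. Fa f \<in> carr D \<and> cdom D (Fa f) = Fo (cdom C f) \<and> ccod D (Fa f) = Fo (ccod C f)) \<and>
     (\<forall>x\<in>cobj C. Fa (cid C x) = cid D (Fo x)) \<and>
     (\<forall>f\<in>carr C. \<forall>g\<in>carr C. ccod C f = cdom C g \<longrightarrow> Fa (ccomp C g f) = ccomp D (Fa g) (Fa f))"

text \<open>Functors as objects of a functor category: extensional pairs (object map, arrow map).\<close>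
definition is_functor ::
  "('o1, 'a1) category \<Rightarrow> ('o2, 'a2) category \<Rightarrow> ('o1 \<Rightarrow> 'o2) \<times> ('a1 \<Rightarrow> 'a2) \<Rightarrow> bool" where
  "is_functor C D F \<longleftrightarrow> functor_maps C D (fst F) (snd F) \<and>
     (\<forall>x. x \<notin> cobj C \<longrightarrow> fst F x = undefined) \<and>
     (\<forall>f. f \<notin> carr C \<longrightarrow> snd F f = undefined)"

definition nat_trans_maps ::
  "('o1, 'a1) category \<Rightarrow> ('o2, 'a2) category \<Rightarrow> ('o1 \<Rightarrow> 'o2) \<Rightarrow> ('a1 \<Rightarrow> 'a2)
     \<Rightarrow> ('o1 \<Rightarrow> 'o2) \<Rightarrow> ('a1 \<Rightarrow> 'a2) \<Rightarrow> ('o1 \<Rightarrow> 'a2) \<Rightarrow> bool" where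
  "nat_trans_maps C D Fo Fa Go Ga \<eta> \<longleftrightarrow>
     (\<forall>x\<in>cobj C. \<eta> x \<in> carr D \<and> cdom D (\<eta> x) = Fo x \<and> ccod D (\<eta> x) = Go x) \<and>
     (\<forall>f\<in>carr C. ccomp D (\<eta> (ccod C f)) (Fa f) = ccomp D (Ga f) (\<eta> (cdom C f)))"

definition nat_iso_maps ::
  "('o1, 'a1) category \<Rightarrow> ('o2, 'a2) category \<Rightarrow> ('o1 \<Rightarrow> 'o2) \<Rightarrow> ('a1 \<Rightarrow> 'a2)
     \<Rightarrow> ('o1 \<Rightarrow> 'o2) \<Rightarrow> ('a1 \<Rightarrow> 'a2) \<Rightarrow> ('o1 \<Rightarrow> 'a2) \<Rightarrow> bool" where
  "nat_iso_maps C D Fo Fa Go Ga \<eta> \<longleftrightarrow>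
     nat_trans_maps C D Fo Fa Go Ga \<eta> \<and> (\<forall>x\<in>cobj C. is_iso D (\<eta> x))"

definition equivalent_categories :: "('o1, 'a1) category \<Rightarrow> ('o2, 'a2) category \<Rightarrow> bool" where
  "equivalent_categories C D \<longleftrightarrow>
     (\<exists>Fo Fa Go Ga \<eta> \<epsilon>.
        functor_maps C D Fo Fa \<and> functor_maps D C Go Ga \<and>
        nat_iso_maps C C (\<lambda>x. x) (\<lambda>f. f) (Go \<circ> Fo) (Ga \<circ> Fa) \<eta> \<and>
        nat_iso_maps D D (Fo \<circ> Go) (Fa \<circ> Ga) (\<lambda>x. x) (\<lambda>f. f) \<epsilon>)"

type_synonym ('oA, 'aA, 'oD, 'aD) functor_rep = "('oA \<Rightarrow> 'oD) \<times> ('aA \<Rightarrow> 'aD)"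
type_synonym ('oA, 'aA, 'oD, 'aD) nat_rep =
  "('oA, 'aA, 'oD, 'aD) functor_rep \<times> ('oA, 'aA, 'oD, 'aD) functor_rep \<times> ('oA \<Rightarrow> 'aD)"

text \<open>The functor category [A, D]: objects are functors; arrows are triples
  (source, target, extensional family of components).\<close>
definition functor_cat ::
  "('oA, 'aA) category \<Rightarrow> ('oD, 'aD) category \<Rightarrow>
     (('oA, 'aA, 'oD, 'aD) functor_rep, ('oA, 'aA, 'oD, 'aD) nat_rep) category" where
  "functor_cat A D =
     \<lparr> cobj = {F. is_functor A D F},
       carr = {(F, G, \<eta>). is_functor A D F \<and> is_functor A D G \<and>
                 nat_trans_maps A D (fst F) (snd F) (fst G) (snd G) \<eta> \<and>
                 (\<forall>x. x \<notin> cobj A \<longrightarrow> \<eta> x = undefined)},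
       cdom = (\<lambda>(F, G, \<eta>). F),
       ccod = (\<lambda>(F, G, \<eta>). G),
       cid = (\<lambda>F. (F, F, \<lambda>x. if x \<in> cobj A then cid D (fst F x) else undefined)),
       ccomp = (\<lambda>(G', H, \<theta>) (F, G, \<eta>).
                  (F, H, \<lambda>x. if x \<in> cobj A then ccomp D (\<theta> x) (\<eta> x) else undefined)) \<rparr>"

definition cartesian_nat_trans ::
  "('oA, 'aA) category \<Rightarrow> ('oD, 'aD) category \<Rightarrow> ('oA, 'aA, 'oD, 'aD) nat_rep \<Rightarrow> bool" where
  "cartesian_nat_trans A D \<tau> \<longleftrightarrow>
     (case \<tau> of (F, G, \<eta>) \<Rightarrow>
        (\<forall>u\<in>carr A. is_pullback D (\<eta> (ccod A u)) (snd G u) (snd F u) (\<eta> (cdom A u))))"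

definition lifted_E ::
  "('oA, 'aA) category \<Rightarrow> ('oD, 'aD) category \<Rightarrow> 'oA \<Rightarrow> 'aD set
     \<Rightarrow> ('oA, 'aA, 'oD, 'aD) nat_rep set" where
  "lifted_E A D t E = {\<tau> \<in> carr (functor_cat A D). (snd (snd \<tau>)) t \<in> E}"

definition lifted_M ::
  "('oA, 'aA) category \<Rightarrow> ('oD, 'aD) category \<Rightarrow> 'oA \<Rightarrow> 'aD set
     \<Rightarrow> ('oA, 'aA, 'oD, 'aD) nat_rep set" where
  "lifted_M A D t M = {\<tau> \<in> carr (functor_cat A D).
      cartesian_nat_trans A D \<tau> \<and> (snd (snd \<tau>)) t \<in> M}"

definition slice :: "('o, 'a) category \<Rightarrow> 'a set \<Rightarrow> 'o \<Rightarrow>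
     ('o \<times> 'a, ('o \<times> 'a) \<times> ('o \<times> 'a) \<times> 'a) category" where
  "slice C N X =
     \<lparr> cobj = {(S, s). s \<in> N \<and> cdom C s = S \<and> ccod C s = X},
       carr = {((S, s), (S', s'), f). s \<in> N \<and> cdom C s = S \<and> ccod C s = X \<and>
                 s' \<in> N \<and> cdom C s' = S' \<and> ccod C s' = X \<and>
                 f \<in> carr C \<and> cdom C f = S \<and> ccod C f = S' \<and> ccomp C s' f = s},
       cdom = (\<lambda>(a, b, f). a),
       ccod = (\<lambda>(a, b, f). b),
       cid = (\<lambda>(S, s). ((S, s), (S, s), cid C S)),
       ccomp = (\<lambda>(b', c, g) (a, b, f). (a, c, ccomp C g f)) \<rparr>"

end

theory Submission
  imports Defs
begin

text \<open>A cartesian transformation \<open>\<mu> : K \<Rightarrow> L\<close> of diagrams \<open>A \<rightarrow> D\<close> is controlled by its component at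
  the terminal object \<open>t\<close>: its naturality square at the unique arrow \<open>x \<rightarrow> t\<close> exhibits \<open>K x\<close> as
  the pullback of \<open>\<mu> t\<close> along \<open>L (x \<rightarrow> t)\<close>. Hence a transformation \<open>\<gamma> : B \<Rightarrow> L\<close> together with
  an arrow \<open>e : B t \<rightarrow> K t\<close> satisfying \<open>\<mu> t \<circ> e = \<gamma> t\<close> lifts uniquely to \<open>\<delta> : B \<Rightarrow> K\<close> with
  \<open>\<mu> \<circ> \<delta> = \<gamma>\<close> and \<open>\<delta> t = e\<close>. Orthogonality of \<open>E'\<close> against \<open>M'\<close> thus reduces to orthogonality
  of the components at \<open>t\<close> in \<open>D\<close>. To factor \<open>\<eta> : F \<Rightarrow> G\<close>, factor \<open>\<eta> t = m \<circ> e\<close> in \<open>D\<close> and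
  pull \<open>m\<close> back along all \<open>G (x \<rightarrow> t)\<close>: this base change of \<open>G\<close> along \<open>m\<close> comes with a cartesian
  projection to \<open>G\<close> whose component at \<open>t\<close> is \<open>m\<close>, and \<open>\<eta>\<close> lifts through it with component
  \<open>e\<close>. The same two constructions, evaluation at \<open>t\<close> and base change, are mutually inverse up to
  the lifts and give the equivalence \<open>M'/G \<simeq> M/G t\<close>.\<close>

section \<open>Categories, pullbacks and slices\<close>

locale cat =
  fixes C :: "('o, 'a) category"
  assumes is_category: "is_category C"
begin

abbreviation "Ob \<equiv> cobj C"
abbreviation "Ar \<equiv> carr C"
abbreviation "dm \<equiv> cdom C"
abbreviation "cd \<equiv> ccod C"
abbreviation "idc \<equiv> cid C"
abbreviation "cp \<equiv> ccomp C"

lemma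
  shows dm_in_Ob [simp]: "f \<in> Ar \<Longrightarrow> dm f \<in> Ob"
    and cd_in_Ob [simp]: "f \<in> Ar \<Longrightarrow> cd f \<in> Ob"
    and id_in_Ar [simp]: "X \<in> Ob \<Longrightarrow> idc X \<in> Ar"
    and dm_id [simp]: "X \<in> Ob \<Longrightarrow> dm (idc X) = X"
    and cd_id [simp]: "X \<in> Ob \<Longrightarrow> cd (idc X) = X"
    and comp_in_Ar [simp]: "f \<in> Ar \<Longrightarrow> g \<in> Ar \<Longrightarrow> cd f = dm g \<Longrightarrow> cp g f \<in> Ar"
    and dm_comp [simp]: "f \<in> Ar \<Longrightarrow> g \<in> Ar \<Longrightarrow> cd f = dm g \<Longrightarrow> dm (cp g f) = dm f"
    and cd_comp [simp]: "f \<in> Ar \<Longrightarrow> g \<in> Ar \<Longrightarrow> cd f = dm g \<Longrightarrow> cd (cp g f) = cd g"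
    and comp_id_left [simp]: "f \<in> Ar \<Longrightarrow> cd f = Y \<Longrightarrow> cp (idc Y) f = f"
    and comp_id_right [simp]: "f \<in> Ar \<Longrightarrow> dm f = X \<Longrightarrow> cp f (idc X) = f"
    and comp_assoc: "f \<in> Ar \<Longrightarrow> g \<in> Ar \<Longrightarrow> h \<in> Ar \<Longrightarrow> cd f = dm g \<Longrightarrow> cd g = dm h \<Longrightarrow>
      cp (cp h g) f = cp h (cp g f)"
  using is_category unfolding is_category_def by metis+

lemma isoI:
  "f \<in> Ar \<Longrightarrow> g \<in> Ar \<Longrightarrow> dm g = cd f \<Longrightarrow> cd g = dm f \<Longrightarrow>
    cp g f = idc (dm f) \<Longrightarrow> cp f g = idc (cd f) \<Longrightarrow> is_iso C f"
  unfolding is_iso_def by blast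

definition iso_inv :: "'a \<Rightarrow> 'a" where
  "iso_inv f = (SOME g. g \<in> Ar \<and> dm g = cd f \<and> cd g = dm f \<and> cp g f = idc (dm f) \<and> cp f g = idc (cd f))"

lemma iso_inv:
  assumes "is_iso C f"
  shows "iso_inv f \<in> Ar" "dm (iso_inv f) = cd f" "cd (iso_inv f) = dm f"
    "cp (iso_inv f) f = idc (dm f)" "cp f (iso_inv f) = idc (cd f)"
proof -
  from assms obtain g
    where "g \<in> Ar \<and> dm g = cd f \<and> cd g = dm f \<and> cp g f = idc (dm f) \<and> cp f g = idc (cd f)"
    unfolding is_iso_def by blast
  then have "iso_inv f \<in> Ar \<and> dm (iso_inv f) = cd f \<and> cd (iso_inv f) = dm f \<and>
      cp (iso_inv f) f = idc (dm f) \<and> cp f (iso_inv f) = idc (cd f)"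
    unfolding iso_inv_def by (rule someI)
  then show "iso_inv f \<in> Ar" "dm (iso_inv f) = cd f" "cd (iso_inv f) = dm f"
    "cp (iso_inv f) f = idc (dm f)" "cp f (iso_inv f) = idc (cd f)" by simp_all
qed

lemma iso_cancel_left:
  assumes f: "is_iso C f" and ab: "a \<in> Ar" "b \<in> Ar" "cd a = dm f" "cd b = dm f"
    and eq: "cp f a = cp f b"
  shows "a = b"
proof -
  have "f \<in> Ar" using f unfolding is_iso_def by blast
  note i = iso_inv[OF f]
  have "a = cp (cp (iso_inv f) f) a" using i ab by simp
  also have "\<dots> = cp (iso_inv f) (cp f a)"
    by (rule comp_assoc) (use i ab \<open>f \<in> Ar\<close> in simp_all)
  also have "\<dots> = cp (iso_inv f) (cp f b)" using eq by simp
  also have "\<dots> = cp (cp (iso_inv f) f) b"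
    by (rule comp_assoc[symmetric]) (use i ab \<open>f \<in> Ar\<close> in simp_all)
  also have "\<dots> = b" using i ab by simp
  finally show ?thesis .
qed

lemma square_comp_right:
  assumes "cp a b = cp c d" "a \<in> Ar" "b \<in> Ar" "c \<in> Ar" "d \<in> Ar" "u \<in> Ar"
    "cd b = dm a" "cd d = dm c" "cd u = dm b" "cd u = dm d"
  shows "cp a (cp b u) = cp c (cp d u)"
  using assms comp_assoc[of u b a] comp_assoc[of u d c] by simp

lemma pullbackD:
  assumes "is_pullback C f g p q"
  shows "f \<in> Ar" "g \<in> Ar" "p \<in> Ar" "q \<in> Ar" "cd f = cd g" "dm p = dm q" "cd p = dm f" "cd q = dm g"
    "cp f p = cp g q"
  using assms unfolding is_pullback_def by simp_all

lemma pullback_universal: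
  assumes "is_pullback C f g p q" "a \<in> Ar" "b \<in> Ar" "dm a = dm b" "cd a = dm f" "cd b = dm g"
    "cp f a = cp g b"
  shows "\<exists>!u. u \<in> Ar \<and> dm u = dm a \<and> cd u = dm p \<and> cp p u = a \<and> cp q u = b"
  using assms unfolding is_pullback_def by blast

definition pb_induced :: "'a \<Rightarrow> 'a \<Rightarrow> 'a \<Rightarrow> 'a \<Rightarrow> 'a" where
  "pb_induced p q a b = (THE u. u \<in> Ar \<and> dm u = dm a \<and> cd u = dm p \<and> cp p u = a \<and> cp q u = b)"

lemma pb_induced:
  assumes "is_pullback C f g p q" "a \<in> Ar" "b \<in> Ar" "dm a = dm b" "cd a = dm f" "cd b = dm g"
    "cp f a = cp g b"
  shows "pb_induced p q a b \<in> Ar" "dm (pb_induced p q a b) = dm a" "cd (pb_induced p q a b) = dm p"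
    "cp p (pb_induced p q a b) = a" "cp q (pb_induced p q a b) = b"
proof -
  have "pb_induced p q a b \<in> Ar \<and> dm (pb_induced p q a b) = dm a \<and> cd (pb_induced p q a b) = dm p \<and>
      cp p (pb_induced p q a b) = a \<and> cp q (pb_induced p q a b) = b"
    unfolding pb_induced_def by (rule theI'[OF pullback_universal[OF assms]])
  then show "pb_induced p q a b \<in> Ar" "dm (pb_induced p q a b) = dm a" "cd (pb_induced p q a b) = dm p"
    "cp p (pb_induced p q a b) = a" "cp q (pb_induced p q a b) = b" by simp_all
qed

lemma pullback_eqI:
  assumes pb: "is_pullback C f g p q"
    and uv: "u \<in> Ar" "v \<in> Ar" "dm u = dm v" "cd u = dm p" "cd v = dm p"
    and eq: "cp p u = cp p v" "cp q u = cp q v"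
  shows "u = v"
proof -
  note P = pullbackD[OF pb]
  have "cp f (cp p u) = cp g (cp q u)" by (rule square_comp_right) (use P uv in simp_all)
  then have "\<exists>!w. w \<in> Ar \<and> dm w = dm (cp p u) \<and> cd w = dm p \<and> cp p w = cp p u \<and> cp q w = cp q u"
    using P uv by (intro pullback_universal[OF pb]) simp_all
  then show ?thesis using P uv eq by auto
qed

lemma pullbackI:
  assumes sq: "f \<in> Ar" "g \<in> Ar" "p \<in> Ar" "q \<in> Ar" "cd f = cd g" "dm p = dm q"
    "cd p = dm f" "cd q = dm g" "cp f p = cp g q"
    and ex: "\<And>a b. a \<in> Ar \<Longrightarrow> b \<in> Ar \<Longrightarrow> dm a = dm b \<Longrightarrow> cd a = dm f \<Longrightarrow> cd b = dm g \<Longrightarrow>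
       cp f a = cp g b \<Longrightarrow> \<exists>u. u \<in> Ar \<and> dm u = dm a \<and> cd u = dm p \<and> cp p u = a \<and> cp q u = b"
    and un: "\<And>u v. u \<in> Ar \<Longrightarrow> v \<in> Ar \<Longrightarrow> dm u = dm v \<Longrightarrow> cd u = dm p \<Longrightarrow> cd v = dm p \<Longrightarrow>
       cp p u = cp p v \<Longrightarrow> cp q u = cp q v \<Longrightarrow> u = v"
  shows "is_pullback C f g p q"
  unfolding is_pullback_def
proof (intro conjI ballI impI)
  fix a b assume "a \<in> Ar" "b \<in> Ar" "dm a = dm b \<and> cd a = dm f \<and> cd b = dm g \<and> cp f a = cp g b"
  then obtain u where "u \<in> Ar \<and> dm u = dm a \<and> cd u = dm p \<and> cp p u = a \<and> cp q u = b"
    using ex by blast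
  then show "\<exists>!u. u \<in> Ar \<and> dm u = dm a \<and> cd u = dm p \<and> cp p u = a \<and> cp q u = b"
    using un by (intro ex1I[of _ u]) auto
qed (fact sq)+

lemma pullback_of_isos:
  assumes sq: "f \<in> Ar" "g \<in> Ar" "p \<in> Ar" "q \<in> Ar" "cd f = cd g" "dm p = dm q"
    "cd p = dm f" "cd q = dm g" "cp f p = cp g q"
    and iso: "is_iso C f" "is_iso C q"
  shows "is_pullback C f g p q"
proof (rule pullbackI[OF sq])
  note i = iso_inv[OF iso(2)]
  fix a b assume ab: "a \<in> Ar" "b \<in> Ar" "dm a = dm b" "cd a = dm f" "cd b = dm g" "cp f a = cp g b"
  let ?u = "cp (iso_inv q) b"
  have "cp q ?u = cp (cp q (iso_inv q)) b" by (rule comp_assoc[symmetric]) (use i sq ab in simp_all)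
  then have qu: "cp q ?u = b" using i sq ab by simp
  have "cp f (cp p ?u) = cp g (cp q ?u)" by (rule square_comp_right) (use i sq ab in simp_all)
  then have "cp f (cp p ?u) = cp f a" using qu ab by simp
  then have "cp p ?u = a" by (rule iso_cancel_left[OF iso(1), rotated -1]) (use i sq ab in simp_all)
  then show "\<exists>u. u \<in> Ar \<and> dm u = dm a \<and> cd u = dm p \<and> cp p u = a \<and> cp q u = b"
    using i sq ab qu by (intro exI[of _ ?u]) simp
next
  fix u v assume uv: "u \<in> Ar" "v \<in> Ar" "dm u = dm v" "cd u = dm p" "cd v = dm p" "cp p u = cp p v"
    "cp q u = cp q v"
  show "u = v" by (rule iso_cancel_left[OF iso(2), rotated -1]) (use sq uv in simp_all)
qed

lemma pullback_id:
  assumes "m \<in> Ar"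
  shows "is_pullback C m (idc (cd m)) (idc (dm m)) m"
proof (rule pullbackI)
  fix a b assume "a \<in> Ar" "b \<in> Ar" "dm a = dm b" "cd a = dm m" "cd b = dm (idc (cd m))"
    "cp m a = cp (idc (cd m)) b"
  then show "\<exists>u. u \<in> Ar \<and> dm u = dm a \<and> cd u = dm (idc (dm m)) \<and> cp (idc (dm m)) u = a \<and> cp m u = b"
    using assms by (intro exI[of _ a]) simp
qed (use assms in simp_all)

lemma pullback_paste:
  assumes P1: "is_pullback C f g p q" and P2: "is_pullback C f' p p' q'"
  shows "is_pullback C (cp f f') g p' (cp q q')"
proof -
  note P = pullbackD[OF P1] and P' = pullbackD[OF P2]
  show ?thesis
  proof (rule pullbackI)
    have "cp (cp f f') p' = cp f (cp f' p')" by (rule comp_assoc) (use P P' in simp_all)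
    also have "\<dots> = cp f (cp p q')" using P' by simp
    also have "\<dots> = cp g (cp q q')" by (rule square_comp_right) (use P P' in simp_all)
    finally show "cp (cp f f') p' = cp g (cp q q')" .
  next
    fix a b assume ab: "a \<in> Ar" "b \<in> Ar" "dm a = dm b" "cd a = dm (cp f f')" "cd b = dm g"
      "cp (cp f f') a = cp g b"
    have "cp f (cp f' a) = cp g b" using ab P P' comp_assoc[of a f' f] by simp
    then obtain v where v: "v \<in> Ar" "dm v = dm a" "cd v = dm p" "cp p v = cp f' a" "cp q v = b"
      using pullback_universal[OF P1, of "cp f' a" b] ab P P' by auto
    then obtain w where w: "w \<in> Ar" "dm w = dm a" "cd w = dm p'" "cp p' w = a" "cp q' w = v"
      using pullback_universal[OF P2, of a v] ab P P' by auto
    have "cp (cp q q') w = b" using v w P P' comp_assoc[of w q' q] by simp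
    then show "\<exists>u. u \<in> Ar \<and> dm u = dm a \<and> cd u = dm p' \<and> cp p' u = a \<and> cp (cp q q') u = b"
      using w by blast
  next
    fix u v assume uv: "u \<in> Ar" "v \<in> Ar" "dm u = dm v" "cd u = dm p'" "cd v = dm p'" "cp p' u = cp p' v"
      "cp (cp q q') u = cp (cp q q') v"
    have "cp p (cp q' u) = cp f' (cp p' u)" by (rule square_comp_right) (use uv P P' in simp_all)
    also have "\<dots> = cp f' (cp p' v)" using uv by simp
    also have "\<dots> = cp p (cp q' v)" by (rule square_comp_right) (use uv P P' in simp_all)
    finally have "cp p (cp q' u) = cp p (cp q' v)" .
    moreover have "cp q (cp q' u) = cp q (cp q' v)"
      using uv P P' comp_assoc[of u q' q] comp_assoc[of v q' q] by simp
    ultimately have q'uv: "cp q' u = cp q' v"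
      by (rule pullback_eqI[OF P1, rotated -2]) (use uv P P' in simp_all)
    show "u = v" by (rule pullback_eqI[OF P2, rotated -2]) (use uv P P' q'uv in simp_all)
  qed (use P P' in simp_all)
qed

lemma pullback_cancel:
  assumes P1: "is_pullback C f g p q" and P2: "is_pullback C f (cp g g') (cp p w) q'"
    and g': "g' \<in> Ar" "cd g' = dm g"
    and w: "w \<in> Ar" "cd w = dm p" "cp q w = cp g' q'"
  shows "is_pullback C q g' w q'"
proof -
  note P = pullbackD[OF P1] and P' = pullbackD[OF P2]
  have q': "cd q' = dm g'" "dm w = dm q'" using P P' g' w by simp_all
  show ?thesis
  proof (rule pullbackI)
    fix a b assume ab: "a \<in> Ar" "b \<in> Ar" "dm a = dm b" "cd a = dm q" "cd b = dm g'" "cp q a = cp g' b"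
    have "cp f (cp p a) = cp g (cp q a)" by (rule square_comp_right) (use P ab in simp_all)
    also have "\<dots> = cp (cp g g') b" using P g' ab comp_assoc[of b g' g] by simp
    finally obtain v
      where v: "v \<in> Ar" "dm v = dm a" "cd v = dm w" "cp (cp p w) v = cp p a" "cp q' v = b"
      using pullback_universal[OF P2, of "cp p a" b] P P' g' w ab by auto
    have "cp p (cp w v) = cp p a" using v P w comp_assoc[of v w p] by simp
    moreover have "cp q (cp w v) = cp q a"
      using square_comp_right[of q w g' q' v] v ab P P' q' g' w by simp
    ultimately have "cp w v = a"
      by (rule pullback_eqI[OF P1, rotated -2]) (use v w ab P in simp_all)
    then show "\<exists>u. u \<in> Ar \<and> dm u = dm a \<and> cd u = dm w \<and> cp w u = a \<and> cp q' u = b"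
      using v by blast
  next
    fix u v assume uv: "u \<in> Ar" "v \<in> Ar" "dm u = dm v" "cd u = dm w" "cd v = dm w" "cp w u = cp w v"
      "cp q' u = cp q' v"
    have "cp (cp p w) u = cp (cp p w) v" using uv w P comp_assoc[of u w p] comp_assoc[of v w p] by simp
    then show "u = v" by (rule pullback_eqI[OF P2, rotated -2]) (use uv w P P' q' in simp_all)
  qed (use P P' g' w q' in simp_all)
qed

end

lemma slice_obj_iff: "(S, s) \<in> cobj (slice C N X) \<longleftrightarrow> s \<in> N \<and> cdom C s = S \<and> ccod C s = X"
  by (simp add: slice_def)

lemma slice_arr_iff:
  "((S, s), (S', s'), f) \<in> carr (slice C N X) \<longleftrightarrow>
     s \<in> N \<and> cdom C s = S \<and> ccod C s = X \<and> s' \<in> N \<and> cdom C s' = S' \<and> ccod C s' = X \<and>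
     f \<in> carr C \<and> cdom C f = S \<and> ccod C f = S' \<and> ccomp C s' f = s"
  by (simp add: slice_def)

lemma slice_dm [simp]: "cdom (slice C N X) (a, b, f) = a"
  and slice_cd [simp]: "ccod (slice C N X) (a, b, f) = b"
  and slice_id [simp]: "cid (slice C N X) (S, s) = ((S, s), (S, s), cid C S)"
  and slice_comp [simp]: "ccomp (slice C N X) (b', c, g) (a, b, f) = (a, c, ccomp C g f)"
  by (simp_all add: slice_def)

lemma (in cat) slice_id_iso:
  assumes "(S, s) \<in> cobj (slice C N X)" "N \<subseteq> Ar"
  shows "is_iso (slice C N X) (cid (slice C N X) (S, s))"
proof -
  have "s \<in> Ar" "dm s = S" using assms by (auto simp: slice_obj_iff)
  then have "((S, s), (S, s), idc S) \<in> carr (slice C N X)"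
    using assms by (auto simp: slice_obj_iff slice_arr_iff)
  then show ?thesis
    unfolding is_iso_def using \<open>s \<in> Ar\<close> \<open>dm s = S\<close> by (auto intro!: bexI)
qed

section \<open>Functor categories and cartesian transformations\<close>

locale functor_category = D: cat D + A: cat A
  for D :: "('oD, 'aD) category" and A :: "('oA, 'aA) category"
begin

abbreviation "FC \<equiv> functor_cat A D"
abbreviation "diagram F \<equiv> is_functor A D F"
abbreviation "ntrans F G \<eta> \<equiv> (F, G, \<eta>) \<in> carr FC"
abbreviation "cart F G \<eta> \<equiv> cartesian_nat_trans A D (F, G, \<eta>)"

lemma
  assumes "diagram F"
  shows diagram_obj [simp]: "x \<in> A.Ob \<Longrightarrow> fst F x \<in> D.Ob"
    and diagram_arr [simp]: "u \<in> A.Ar \<Longrightarrow> snd F u \<in> D.Ar"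
    and dm_diagram_arr [simp]: "u \<in> A.Ar \<Longrightarrow> D.dm (snd F u) = fst F (A.dm u)"
    and cd_diagram_arr [simp]: "u \<in> A.Ar \<Longrightarrow> D.cd (snd F u) = fst F (A.cd u)"
    and diagram_id [simp]: "x \<in> A.Ob \<Longrightarrow> snd F (A.idc x) = D.idc (fst F x)"
    and diagram_comp: "u \<in> A.Ar \<Longrightarrow> v \<in> A.Ar \<Longrightarrow> A.cd u = A.dm v \<Longrightarrow>
      snd F (A.cp v u) = D.cp (snd F v) (snd F u)"
  using assms unfolding is_functor_def functor_maps_def by blast+

lemma FC_Ob [simp]: "cobj FC = {F. diagram F}"
  and FC_dm [simp]: "cdom FC (F, G, \<eta>) = F"
  and FC_cd [simp]: "ccod FC (F, G, \<eta>) = G"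
  and FC_id: "cid FC F = (F, F, \<lambda>x. if x \<in> A.Ob then D.idc (fst F x) else undefined)"
  and FC_comp [simp]: "ccomp FC (G', H, \<theta>) (F, G, \<eta>) =
    (F, H, \<lambda>x. if x \<in> A.Ob then D.cp (\<theta> x) (\<eta> x) else undefined)"
  by (simp_all add: functor_cat_def)

lemma ntrans_iff:
  "ntrans F G \<eta> \<longleftrightarrow> diagram F \<and> diagram G \<and>
     (\<forall>x\<in>A.Ob. \<eta> x \<in> D.Ar \<and> D.dm (\<eta> x) = fst F x \<and> D.cd (\<eta> x) = fst G x) \<and>
     (\<forall>u\<in>A.Ar. D.cp (\<eta> (A.cd u)) (snd F u) = D.cp (snd G u) (\<eta> (A.dm u))) \<and>
     (\<forall>x. x \<notin> A.Ob \<longrightarrow> \<eta> x = undefined)"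
  by (simp add: functor_cat_def nat_trans_maps_def)

lemma
  assumes "ntrans F G \<eta>"
  shows ntrans_dom: "diagram F"
    and ntrans_cod: "diagram G"
    and ntrans_arr [simp]: "x \<in> A.Ob \<Longrightarrow> \<eta> x \<in> D.Ar"
    and ntrans_dm [simp]: "x \<in> A.Ob \<Longrightarrow> D.dm (\<eta> x) = fst F x"
    and ntrans_cd [simp]: "x \<in> A.Ob \<Longrightarrow> D.cd (\<eta> x) = fst G x"
    and ntrans_natural: "u \<in> A.Ar \<Longrightarrow> D.cp (\<eta> (A.cd u)) (snd F u) = D.cp (snd G u) (\<eta> (A.dm u))"
    and ntrans_undefined: "x \<notin> A.Ob \<Longrightarrow> \<eta> x = undefined"
  using assms unfolding ntrans_iff by blast+

lemma ntransI:
  assumes "diagram F" "diagram G"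
    and "\<And>x. x \<in> A.Ob \<Longrightarrow> \<eta> x \<in> D.Ar \<and> D.dm (\<eta> x) = fst F x \<and> D.cd (\<eta> x) = fst G x"
    and "\<And>u. u \<in> A.Ar \<Longrightarrow> D.cp (\<eta> (A.cd u)) (snd F u) = D.cp (snd G u) (\<eta> (A.dm u))"
    and "\<And>x. x \<notin> A.Ob \<Longrightarrow> \<eta> x = undefined"
  shows "ntrans F G \<eta>"
  using assms unfolding ntrans_iff by blast

lemma ntrans_eqI:
  assumes "ntrans F G \<eta>" "ntrans F' G' \<theta>" "\<And>x. x \<in> A.Ob \<Longrightarrow> \<eta> x = \<theta> x"
  shows "\<eta> = \<theta>"
proof
  fix x show "\<eta> x = \<theta> x"
    using assms ntrans_undefined[OF assms(1)] ntrans_undefined[OF assms(2)]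
    by (cases "x \<in> A.Ob") simp_all
qed

lemma FC_arr_cases:
  assumes "\<tau> \<in> carr FC"
  obtains F G \<eta> where "\<tau> = (F, G, \<eta>)" "ntrans F G \<eta>"
  using assms by (cases \<tau>) auto

lemma FC_composable_cases:
  assumes "ccod FC \<sigma> = cdom FC \<tau>"
  obtains F G \<eta> H \<theta> where "\<sigma> = (F, G, \<eta>)" "\<tau> = (G, H, \<theta>)"
  using assms by (cases \<sigma>, cases \<tau>) simp

lemma ntrans_id:
  assumes "diagram F"
  shows "ntrans F F (\<lambda>x. if x \<in> A.Ob then D.idc (fst F x) else undefined)"
  by (rule ntransI) (use assms in simp_all)

lemma ntrans_comp:
  assumes \<eta>: "ntrans F G \<eta>" and \<theta>: "ntrans G H \<theta>"
  shows "ntrans F H (\<lambda>x. if x \<in> A.Ob then D.cp (\<theta> x) (\<eta> x) else undefined)"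
proof (rule ntransI)
  note diagrams = ntrans_dom[OF \<eta>] ntrans_cod[OF \<eta>] ntrans_cod[OF \<theta>]
  show "diagram F" "diagram H" by (fact diagrams(1), fact diagrams(3))
  fix u assume u: "u \<in> A.Ar"
  have "D.cp (D.cp (\<theta> (A.cd u)) (\<eta> (A.cd u))) (snd F u) =
      D.cp (\<theta> (A.cd u)) (D.cp (\<eta> (A.cd u)) (snd F u))"
    by (rule D.comp_assoc) (use u \<eta> \<theta> diagrams in simp_all)
  also have "\<dots> = D.cp (\<theta> (A.cd u)) (D.cp (snd G u) (\<eta> (A.dm u)))"
    using ntrans_natural[OF \<eta> u] by simp
  also have "\<dots> = D.cp (snd H u) (D.cp (\<theta> (A.dm u)) (\<eta> (A.dm u)))"
    by (rule D.square_comp_right) (use u \<eta> \<theta> diagrams ntrans_natural[OF \<theta> u] in simp_all)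
  finally show "D.cp (if A.cd u \<in> A.Ob then D.cp (\<theta> (A.cd u)) (\<eta> (A.cd u)) else undefined) (snd F u) =
      D.cp (snd H u) (if A.dm u \<in> A.Ob then D.cp (\<theta> (A.dm u)) (\<eta> (A.dm u)) else undefined)"
    using u by simp
qed (use \<eta> \<theta> in simp_all)

lemma FC_comp_eq_iff:
  assumes "ntrans F H \<zeta>"
  shows "ccomp FC (G, H, \<theta>) (F, G, \<eta>) = (F, H, \<zeta>) \<longleftrightarrow> (\<forall>x\<in>A.Ob. D.cp (\<theta> x) (\<eta> x) = \<zeta> x)"
  using ntrans_undefined[OF assms] by (auto simp: fun_eq_iff split: if_splits)

lemma FC_iso_component:
  assumes iso: "is_iso FC (F, G, \<eta>)" and x: "x \<in> A.Ob"
  shows "is_iso D (\<eta> x)"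
proof -
  obtain \<theta> where \<theta>: "ntrans G F \<theta>" "ccomp FC (G, F, \<theta>) (F, G, \<eta>) = cid FC F"
    "ccomp FC (F, G, \<eta>) (G, F, \<theta>) = cid FC G"
    using iso unfolding is_iso_def by (auto elim: FC_arr_cases)
  have \<eta>: "ntrans F G \<eta>" using iso unfolding is_iso_def by blast
  have "D.cp (\<theta> x) (\<eta> x) = D.idc (fst F x)" "D.cp (\<eta> x) (\<theta> x) = D.idc (fst G x)"
    using \<theta>(2,3) x unfolding FC_id by (simp_all add: fun_eq_iff) meson+
  then show ?thesis using \<eta> \<theta>(1) x by (intro D.isoI[of _ "\<theta> x"]) simp_all
qed

lemma cartD: "cart F G \<eta> \<Longrightarrow> u \<in> A.Ar \<Longrightarrow> is_pullback D (\<eta> (A.cd u)) (snd G u) (snd F u) (\<eta> (A.dm u))"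
  and cartI: "(\<And>u. u \<in> A.Ar \<Longrightarrow> is_pullback D (\<eta> (A.cd u)) (snd G u) (snd F u) (\<eta> (A.dm u))) \<Longrightarrow> cart F G \<eta>"
  by (simp_all add: cartesian_nat_trans_def)

lemma cart_of_isos:
  assumes \<eta>: "ntrans F G \<eta>" and iso: "\<And>x. x \<in> A.Ob \<Longrightarrow> is_iso D (\<eta> x)"
  shows "cart F G \<eta>"
proof (rule cartI)
  fix u assume u: "u \<in> A.Ar"
  show "is_pullback D (\<eta> (A.cd u)) (snd G u) (snd F u) (\<eta> (A.dm u))"
    by (rule D.pullback_of_isos)
      (use u \<eta> ntrans_dom[OF \<eta>] ntrans_cod[OF \<eta>] ntrans_natural[OF \<eta> u] iso in simp_all)
qed

lemma cart_comp:
  assumes "cart F G \<eta>" "cart G H \<theta>"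
  shows "cart F H (\<lambda>x. if x \<in> A.Ob then D.cp (\<theta> x) (\<eta> x) else undefined)"
  using D.pullback_paste[OF cartD[OF assms(2)] cartD[OF assms(1)]] by (intro cartI) simp

end

section \<open>Lifting along cartesian transformations\<close>

locale functor_category_terminal = functor_category D A
  for D :: "('oD, 'aD) category" and A :: "('oA, 'aA) category" +
  fixes t :: 'oA
  assumes terminal: "is_terminal A t"
begin

definition bang :: "'oA \<Rightarrow> 'aA" where
  "bang x = (THE u. u \<in> A.Ar \<and> A.dm u = x \<and> A.cd u = t)"

lemma t_in_Ob [simp]: "t \<in> A.Ob"
  using terminal unfolding is_terminal_def by blast

lemma
  assumes "x \<in> A.Ob"
  shows bang_in_Ar [simp]: "bang x \<in> A.Ar"
    and dm_bang [simp]: "A.dm (bang x) = x"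
    and cd_bang [simp]: "A.cd (bang x) = t"
proof -
  have "\<exists>!u. u \<in> A.Ar \<and> A.dm u = x \<and> A.cd u = t"
    using terminal assms unfolding is_terminal_def by blast
  then have "bang x \<in> A.Ar \<and> A.dm (bang x) = x \<and> A.cd (bang x) = t"
    unfolding bang_def by (rule theI')
  then show "bang x \<in> A.Ar" "A.dm (bang x) = x" "A.cd (bang x) = t" by simp_all
qed

lemma bang_unique:
  assumes "u \<in> A.Ar" "A.cd u = t"
  shows "bang (A.dm u) = u"
proof -
  have "\<exists>!v. v \<in> A.Ar \<and> A.dm v = A.dm u \<and> A.cd v = t"
    using terminal assms unfolding is_terminal_def by simp
  then show ?thesis unfolding bang_def by (rule the1_equality) (use assms in simp)
qed

lemma bang_t [simp]: "bang t = A.idc t"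
  using bang_unique[of "A.idc t"] by simp

lemma bang_comp: "u \<in> A.Ar \<Longrightarrow> A.cp (bang (A.cd u)) u = bang (A.dm u)"
  using bang_unique[of "A.cp (bang (A.cd u)) u"] by simp

lemma diagram_bang_comp:
  "diagram F \<Longrightarrow> u \<in> A.Ar \<Longrightarrow> D.cp (snd F (bang (A.cd u))) (snd F u) = snd F (bang (A.dm u))"
  using diagram_comp[of F u "bang (A.cd u)"] bang_comp[of u] by simp

lemma cart_bang:
  "cart F G \<eta> \<Longrightarrow> x \<in> A.Ob \<Longrightarrow> is_pullback D (\<eta> t) (snd G (bang x)) (snd F (bang x)) (\<eta> x)"
  using cartD[of F G \<eta> "bang x"] by simp

lemma cart_eqI:
  assumes \<mu>: "ntrans K L \<mu>" "cart K L \<mu>" and \<delta>: "ntrans B K \<delta>" "ntrans B K \<delta>'"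
    and at_t: "\<delta> t = \<delta>' t" and comp: "\<And>x. x \<in> A.Ob \<Longrightarrow> D.cp (\<mu> x) (\<delta> x) = D.cp (\<mu> x) (\<delta>' x)"
  shows "\<delta> = \<delta>'"
proof (rule ntrans_eqI[OF \<delta>])
  fix x assume x: "x \<in> A.Ob"
  have "D.cp (snd K (bang x)) (\<delta> x) = D.cp (\<delta> t) (snd B (bang x))"
    using ntrans_natural[OF \<delta>(1), of "bang x"] x by simp
  also have "\<dots> = D.cp (snd K (bang x)) (\<delta>' x)"
    using ntrans_natural[OF \<delta>(2), of "bang x"] x at_t by simp
  finally show "\<delta> x = \<delta>' x"
    by (rule D.pullback_eqI[OF cart_bang[OF \<mu>(2) x], rotated -2])
      (use x comp \<mu> \<delta> ntrans_dom[OF \<delta>(1)] ntrans_cod[OF \<delta>(1)] in simp_all)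
qed

definition cart_lift ::
  "('oA, 'aA, 'oD, 'aD) functor_rep \<Rightarrow> ('oA, 'aA, 'oD, 'aD) functor_rep \<Rightarrow>
     ('oA \<Rightarrow> 'aD) \<Rightarrow> ('oA \<Rightarrow> 'aD) \<Rightarrow> 'aD \<Rightarrow> 'oA \<Rightarrow> 'aD" where
  "cart_lift B K \<mu> \<gamma> e x = (if x \<in> A.Ob
     then D.pb_induced (snd K (bang x)) (\<mu> x) (D.cp e (snd B (bang x))) (\<gamma> x) else undefined)"

context
  fixes K L \<mu> B \<gamma> e
  assumes \<mu>: "ntrans K L \<mu>" "cart K L \<mu>" and \<gamma>: "ntrans B L \<gamma>"
    and e: "e \<in> D.Ar" "D.dm e = fst B t" "D.cd e = fst K t" "D.cp (\<mu> t) e = \<gamma> t"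
begin

lemma cart_lift_component:
  assumes x: "x \<in> A.Ob"
  shows "cart_lift B K \<mu> \<gamma> e x \<in> D.Ar" "D.dm (cart_lift B K \<mu> \<gamma> e x) = fst B x"
    "D.cd (cart_lift B K \<mu> \<gamma> e x) = fst K x"
    "D.cp (snd K (bang x)) (cart_lift B K \<mu> \<gamma> e x) = D.cp e (snd B (bang x))"
    "D.cp (\<mu> x) (cart_lift B K \<mu> \<gamma> e x) = \<gamma> x"
proof -
  have B: "diagram B" and K: "diagram K" and L: "diagram L"
    using \<mu> \<gamma> by (blast intro: ntrans_dom ntrans_cod)+
  have "D.cp (\<mu> t) (D.cp e (snd B (bang x))) = D.cp (D.cp (\<mu> t) e) (snd B (bang x))"
    by (rule D.comp_assoc[symmetric]) (use x \<mu> e B in simp_all)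
  also have "\<dots> = D.cp (snd L (bang x)) (\<gamma> x)"
    using ntrans_natural[OF \<gamma>, of "bang x"] x e by simp
  finally show "cart_lift B K \<mu> \<gamma> e x \<in> D.Ar" "D.dm (cart_lift B K \<mu> \<gamma> e x) = fst B x"
    "D.cd (cart_lift B K \<mu> \<gamma> e x) = fst K x"
    "D.cp (snd K (bang x)) (cart_lift B K \<mu> \<gamma> e x) = D.cp e (snd B (bang x))"
    "D.cp (\<mu> x) (cart_lift B K \<mu> \<gamma> e x) = \<gamma> x"
    using D.pb_induced[OF cart_bang[OF \<mu>(2) x], of "D.cp e (snd B (bang x))" "\<gamma> x"] x \<mu> \<gamma> e B K L
    by (simp_all add: cart_lift_def)
qed

lemma cart_lift_ntrans: "ntrans B K (cart_lift B K \<mu> \<gamma> e)"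
proof (rule ntransI)
  have B: "diagram B" and K: "diagram K" and L: "diagram L"
    using \<mu> \<gamma> by (blast intro: ntrans_dom ntrans_cod)+
  note \<delta> = cart_lift_component
  let ?\<delta> = "cart_lift B K \<mu> \<gamma> e"
  fix u assume u: "u \<in> A.Ar"
  let ?x = "A.dm u" and ?y = "A.cd u"
  have x: "?x \<in> A.Ob" and y: "?y \<in> A.Ob" using u by simp_all
  have "D.cp (snd K (bang ?y)) (D.cp (?\<delta> ?y) (snd B u)) = D.cp e (D.cp (snd B (bang ?y)) (snd B u))"
    by (rule D.square_comp_right) (use u y \<delta>[OF y] e B K in simp_all)
  also have "\<dots> = D.cp (snd K (bang ?x)) (?\<delta> ?x)"
    using diagram_bang_comp[OF B u] \<delta>(4)[OF x] by simp
  also have "\<dots> = D.cp (snd K (bang ?y)) (D.cp (snd K u) (?\<delta> ?x))"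
    using diagram_bang_comp[OF K u] D.comp_assoc[of "?\<delta> ?x" "snd K u" "snd K (bang ?y)"] u x \<delta>[OF x] K
    by simp
  finally have "D.cp (snd K (bang ?y)) (D.cp (?\<delta> ?y) (snd B u)) =
      D.cp (snd K (bang ?y)) (D.cp (snd K u) (?\<delta> ?x))" .
  moreover have "D.cp (\<mu> ?y) (D.cp (?\<delta> ?y) (snd B u)) = D.cp (\<mu> ?y) (D.cp (snd K u) (?\<delta> ?x))"
  proof -
    have "D.cp (\<mu> ?y) (D.cp (?\<delta> ?y) (snd B u)) = D.cp (\<gamma> ?y) (snd B u)"
      using D.comp_assoc[of "snd B u" "?\<delta> ?y" "\<mu> ?y"] u y \<delta>[OF y] \<mu> B by simp
    also have "\<dots> = D.cp (snd L u) (D.cp (\<mu> ?x) (?\<delta> ?x))"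
      using ntrans_natural[OF \<gamma> u] \<delta>(5)[OF x] by simp
    also have "\<dots> = D.cp (\<mu> ?y) (D.cp (snd K u) (?\<delta> ?x))"
      by (rule D.square_comp_right) (use u x y \<delta>[OF x] \<mu> K L ntrans_natural[OF \<mu>(1) u] in simp_all)
    finally show ?thesis .
  qed
  ultimately show "D.cp (?\<delta> ?y) (snd B u) = D.cp (snd K u) (?\<delta> ?x)"
    by (rule D.pullback_eqI[OF cart_bang[OF \<mu>(2) y], rotated -2])
      (use u x y \<delta>[OF x] \<delta>[OF y] B K in simp_all)
next
  show "diagram B" "diagram K" using \<mu> \<gamma> by (blast intro: ntrans_dom ntrans_cod)+
  show "cart_lift B K \<mu> \<gamma> e x \<in> D.Ar \<and> D.dm (cart_lift B K \<mu> \<gamma> e x) = fst B x \<and>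
      D.cd (cart_lift B K \<mu> \<gamma> e x) = fst K x" if "x \<in> A.Ob" for x
    using cart_lift_component[OF that] by simp
qed (simp add: cart_lift_def)

lemma cart_lift:
  shows "ntrans B K (cart_lift B K \<mu> \<gamma> e)" "cart_lift B K \<mu> \<gamma> e t = e"
    "\<And>x. x \<in> A.Ob \<Longrightarrow> D.cp (\<mu> x) (cart_lift B K \<mu> \<gamma> e x) = \<gamma> x"
proof -
  have "diagram B" "diagram K" using \<mu> \<gamma> by (blast intro: ntrans_dom ntrans_cod)+
  then show "cart_lift B K \<mu> \<gamma> e t = e" using cart_lift_component[OF t_in_Ob] e by simp
qed (fact cart_lift_ntrans cart_lift_component)+

lemma cart_lift_unique:
  assumes "ntrans B K \<delta>" "\<delta> t = e" "\<And>x. x \<in> A.Ob \<Longrightarrow> D.cp (\<mu> x) (\<delta> x) = \<gamma> x"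
  shows "cart_lift B K \<mu> \<gamma> e = \<delta>"
  by (rule cart_eqI[OF \<mu> cart_lift(1) assms(1)]) (simp_all add: cart_lift assms)

end

lemma cart_lift_id:
  assumes "ntrans K L \<mu>" "cart K L \<mu>"
  shows "(K, K, cart_lift K K \<mu> \<mu> (D.idc (fst K t))) = cid FC K"
proof -
  have K: "diagram K" using assms(1) by (rule ntrans_dom)
  have "cart_lift K K \<mu> \<mu> (D.idc (fst K t)) = (\<lambda>x. if x \<in> A.Ob then D.idc (fst K x) else undefined)"
    by (rule cart_lift_unique[OF assms assms(1)]) (use assms K ntrans_id[OF K] in simp_all)
  then show ?thesis by (simp add: FC_id)
qed

lemma cart_lift_comp:
  assumes \<mu>: "ntrans K L \<mu>" "cart K L \<mu>" and \<nu>: "ntrans J L \<nu>" "cart J L \<nu>" and \<gamma>: "ntrans B L \<gamma>"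
    and e: "e \<in> D.Ar" "D.dm e = fst B t" "D.cd e = fst K t" "D.cp (\<mu> t) e = \<gamma> t"
    and e': "e' \<in> D.Ar" "D.dm e' = fst K t" "D.cd e' = fst J t" "D.cp (\<nu> t) e' = \<mu> t"
  shows "ccomp FC (K, J, cart_lift K J \<nu> \<mu> e') (B, K, cart_lift B K \<mu> \<gamma> e) =
    (B, J, cart_lift B J \<nu> \<gamma> (D.cp e' e))"
proof -
  note l = cart_lift[OF \<mu> \<gamma> e] and l' = cart_lift[OF \<nu> \<mu>(1) e']
  let ?\<zeta> = "\<lambda>x. if x \<in> A.Ob then D.cp (cart_lift K J \<nu> \<mu> e' x) (cart_lift B K \<mu> \<gamma> e x) else undefined"
  have "D.cp (\<nu> t) (D.cp e' e) = \<gamma> t"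
    using D.comp_assoc[of e e' "\<nu> t"] e e' \<nu> by simp
  moreover have "D.cp (\<nu> x) (?\<zeta> x) = \<gamma> x" if x: "x \<in> A.Ob" for x
    using D.comp_assoc[of "cart_lift B K \<mu> \<gamma> e x" "cart_lift K J \<nu> \<mu> e' x" "\<nu> x"] l l' x \<nu> by simp
  ultimately have "cart_lift B J \<nu> \<gamma> (D.cp e' e) = ?\<zeta>"
    by (intro cart_lift_unique[OF \<nu> \<gamma>]) (use e e' l l' ntrans_comp[OF l(1) l'(1)] in simp_all)
  then show ?thesis by simp
qed

lemma cart_lift_precomp:
  assumes \<mu>: "ntrans K L \<mu>" "cart K L \<mu>" and \<gamma>: "ntrans B L \<gamma>"
    and e: "e \<in> D.Ar" "D.dm e = fst B t" "D.cd e = fst K t" "D.cp (\<mu> t) e = \<gamma> t"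
    and \<epsilon>: "ntrans F B \<epsilon>" and \<phi>: "ntrans F K \<phi>" and at_t: "D.cp e (\<epsilon> t) = \<phi> t"
    and square: "\<And>x. x \<in> A.Ob \<Longrightarrow> D.cp (\<gamma> x) (\<epsilon> x) = D.cp (\<mu> x) (\<phi> x)"
  shows "ccomp FC (B, K, cart_lift B K \<mu> \<gamma> e) (F, B, \<epsilon>) = (F, K, \<phi>)"
proof -
  note \<delta> = cart_lift[OF \<mu> \<gamma> e]
  let ?\<delta> = "cart_lift B K \<mu> \<gamma> e"
  have "D.cp (\<mu> x) (D.cp (?\<delta> x) (\<epsilon> x)) = D.cp (\<mu> x) (\<phi> x)" if x: "x \<in> A.Ob" for x
  proof -
    have "D.cp (\<mu> x) (D.cp (?\<delta> x) (\<epsilon> x)) = D.cp (D.cp (\<mu> x) (?\<delta> x)) (\<epsilon> x)"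
      by (rule D.comp_assoc[symmetric]) (use x \<delta> \<epsilon> \<mu> in simp_all)
    also have "\<dots> = D.cp (\<mu> x) (\<phi> x)" using \<delta>(3) square x by simp
    finally show ?thesis .
  qed
  then have "(\<lambda>x. if x \<in> A.Ob then D.cp (?\<delta> x) (\<epsilon> x) else undefined) = \<phi>"
    by (intro cart_eqI[OF \<mu> ntrans_comp[OF \<epsilon> \<delta>(1)] \<phi>]) (simp_all add: \<delta> at_t)
  then show ?thesis by simp
qed

end

section \<open>Base change\<close>

locale functor_category_pullbacks = functor_category_terminal D A t
  for D :: "('oD, 'aD) category" and A :: "('oA, 'aA) category" and t :: 'oA +
  assumes pullbacks: "has_pullbacks D"
begin

text \<open>The base change of a diagram \<open>G\<close> along \<open>m : X \<rightarrow> G t\<close> is \<open>x \<mapsto> X \<times>\<^bsub>G t\<^esub> G x\<close>, the pullback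
  of \<open>m\<close> along \<open>G (bang x)\<close>. At \<open>t\<close> the trivial pullback is chosen, so that the projection of the
  base change onto \<open>G\<close> has \<open>m\<close> itself as its component at \<open>t\<close>.\<close>

definition pb_legs :: "('oA, 'aA, 'oD, 'aD) functor_rep \<Rightarrow> 'aD \<Rightarrow> 'oA \<Rightarrow> 'aD \<times> 'aD" where
  "pb_legs G m x = (if x = t then (D.idc (D.dm m), m)
     else (SOME pq. is_pullback D m (snd G (bang x)) (fst pq) (snd pq)))"

abbreviation "pb_fst G m x \<equiv> fst (pb_legs G m x)"
abbreviation "pb_snd G m x \<equiv> snd (pb_legs G m x)"

definition base_change ::
  "('oA, 'aA, 'oD, 'aD) functor_rep \<Rightarrow> 'aD \<Rightarrow> ('oA, 'aA, 'oD, 'aD) functor_rep" where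
  "base_change G m =
     (\<lambda>x. if x \<in> A.Ob then D.dm (pb_fst G m x) else undefined,
      \<lambda>u. if u \<in> A.Ar
           then D.pb_induced (pb_fst G m (A.cd u)) (pb_snd G m (A.cd u))
                  (pb_fst G m (A.dm u)) (D.cp (snd G u) (pb_snd G m (A.dm u)))
           else undefined)"

definition base_change_proj :: "('oA, 'aA, 'oD, 'aD) functor_rep \<Rightarrow> 'aD \<Rightarrow> 'oA \<Rightarrow> 'aD" where
  "base_change_proj G m x = (if x \<in> A.Ob then pb_snd G m x else undefined)"

lemma base_change_map_eq:
  "u \<in> A.Ar \<Longrightarrow> snd (base_change G m) u = D.pb_induced (pb_fst G m (A.cd u)) (pb_snd G m (A.cd u))
     (pb_fst G m (A.dm u)) (D.cp (snd G u) (pb_snd G m (A.dm u)))"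
  by (simp add: base_change_def)

context
  fixes G m
  assumes G: "diagram G" and m: "m \<in> D.Ar" "D.cd m = fst G t"
begin

lemma pb_legs_pullback:
  assumes x: "x \<in> A.Ob"
  shows "is_pullback D m (snd G (bang x)) (pb_fst G m x) (pb_snd G m x)"
proof (cases "x = t")
  case True
  then show ?thesis using D.pullback_id[OF m(1)] m G by (simp add: pb_legs_def)
next
  case False
  have "\<exists>pq. is_pullback D m (snd G (bang x)) (fst pq) (snd pq)"
    using pullbacks x m G unfolding has_pullbacks_def by simp
  then have "is_pullback D m (snd G (bang x))
      (fst (SOME pq. is_pullback D m (snd G (bang x)) (fst pq) (snd pq)))
      (snd (SOME pq. is_pullback D m (snd G (bang x)) (fst pq) (snd pq)))"
    by (rule someI_ex)
  then show ?thesis using False by (simp add: pb_legs_def)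
qed

lemma pb_legs:
  assumes x: "x \<in> A.Ob"
  shows "pb_fst G m x \<in> D.Ar" "D.dm (pb_fst G m x) = fst (base_change G m) x"
    "D.cd (pb_fst G m x) = D.dm m"
    "pb_snd G m x \<in> D.Ar" "D.dm (pb_snd G m x) = fst (base_change G m) x"
    "D.cd (pb_snd G m x) = fst G x"
    "D.cp m (pb_fst G m x) = D.cp (snd G (bang x)) (pb_snd G m x)"
  using D.pullbackD[OF pb_legs_pullback[OF x]] x G by (simp_all add: base_change_def)

lemma base_change_map:
  assumes u: "u \<in> A.Ar"
  shows "snd (base_change G m) u \<in> D.Ar"
    "D.dm (snd (base_change G m) u) = fst (base_change G m) (A.dm u)"
    "D.cd (snd (base_change G m) u) = fst (base_change G m) (A.cd u)"
    "D.cp (pb_fst G m (A.cd u)) (snd (base_change G m) u) = pb_fst G m (A.dm u)"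
    "D.cp (pb_snd G m (A.cd u)) (snd (base_change G m) u) = D.cp (snd G u) (pb_snd G m (A.dm u))"
proof -
  let ?x = "A.dm u" and ?y = "A.cd u"
  have x: "?x \<in> A.Ob" and y: "?y \<in> A.Ob" using u by simp_all
  have "D.cp m (pb_fst G m ?x) = D.cp (snd G (bang ?x)) (pb_snd G m ?x)" using pb_legs(7)[OF x] .
  also have "\<dots> = D.cp (snd G (bang ?y)) (D.cp (snd G u) (pb_snd G m ?x))"
    using diagram_bang_comp[OF G u] D.comp_assoc[of "pb_snd G m ?x" "snd G u" "snd G (bang ?y)"]
      pb_legs[OF x] u G
    by simp
  finally show "snd (base_change G m) u \<in> D.Ar"
    "D.dm (snd (base_change G m) u) = fst (base_change G m) ?x"
    "D.cd (snd (base_change G m) u) = fst (base_change G m) ?y"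
    "D.cp (pb_fst G m ?y) (snd (base_change G m) u) = pb_fst G m ?x"
    "D.cp (pb_snd G m ?y) (snd (base_change G m) u) = D.cp (snd G u) (pb_snd G m ?x)"
    using D.pb_induced[OF pb_legs_pullback[OF y], of "pb_fst G m ?x" "D.cp (snd G u) (pb_snd G m ?x)"]
      pb_legs[OF x] pb_legs[OF y] u G
    by (simp_all add: base_change_map_eq)
qed

lemma base_change_map_unique:
  assumes u: "u \<in> A.Ar"
    and w: "w \<in> D.Ar" "D.dm w = fst (base_change G m) (A.dm u)"
      "D.cd w = fst (base_change G m) (A.cd u)"
      "D.cp (pb_fst G m (A.cd u)) w = pb_fst G m (A.dm u)"
      "D.cp (pb_snd G m (A.cd u)) w = D.cp (snd G u) (pb_snd G m (A.dm u))"
  shows "snd (base_change G m) u = w"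
  by (rule D.pullback_eqI[OF pb_legs_pullback[of "A.cd u"]])
    (use u w base_change_map[OF u] pb_legs[of "A.cd u"] in simp_all)

lemma base_change_diagram: "diagram (base_change G m)"
  unfolding is_functor_def functor_maps_def
proof (intro conjI ballI allI impI)
  fix x assume x: "x \<in> A.Ob"
  show Px: "fst (base_change G m) x \<in> D.Ob" using pb_legs[OF x] D.dm_in_Ob by metis
  show "snd (base_change G m) (A.idc x) = D.idc (fst (base_change G m) x)"
    by (rule base_change_map_unique) (use x Px pb_legs[OF x] G in simp_all)
next
  fix u v assume u: "u \<in> A.Ar" and v: "v \<in> A.Ar" and uv: "A.cd u = A.dm v"
  note Pu = base_change_map[OF u] and Pv = base_change_map[OF v]
  let ?Pu = "snd (base_change G m) u" and ?Pv = "snd (base_change G m) v"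
  show "snd (base_change G m) (A.cp v u) = D.cp ?Pv ?Pu"
  proof (rule base_change_map_unique)
    show "D.cp (pb_fst G m (A.cd (A.cp v u))) (D.cp ?Pv ?Pu) = pb_fst G m (A.dm (A.cp v u))"
      using Pu Pv pb_legs[of "A.cd v"] u v uv D.comp_assoc[of ?Pu ?Pv "pb_fst G m (A.cd v)"] by simp
    have "D.cp (pb_snd G m (A.cd v)) (D.cp ?Pv ?Pu) = D.cp (snd G v) (D.cp (pb_snd G m (A.cd u)) ?Pu)"
      by (rule D.square_comp_right)
        (use Pu Pv pb_legs[of "A.cd v"] pb_legs[of "A.cd u"] u v uv G in simp_all)
    also have "\<dots> = D.cp (snd G (A.cp v u)) (pb_snd G m (A.dm u))"
      using Pu pb_legs[of "A.dm u"] diagram_comp[OF G u v uv] u v uv G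
        D.comp_assoc[of "pb_snd G m (A.dm u)" "snd G u" "snd G v"] by simp
    finally show "D.cp (pb_snd G m (A.cd (A.cp v u))) (D.cp ?Pv ?Pu) =
        D.cp (snd G (A.cp v u)) (pb_snd G m (A.dm (A.cp v u)))"
      using u v uv by simp
  qed (use u v uv Pu Pv in simp_all)
next
  fix u assume "u \<in> A.Ar"
  then show "snd (base_change G m) u \<in> D.Ar"
    "D.dm (snd (base_change G m) u) = fst (base_change G m) (A.dm u)"
    "D.cd (snd (base_change G m) u) = fst (base_change G m) (A.cd u)"
    by (simp_all add: base_change_map)
qed (simp_all add: base_change_def)

lemma base_change_at_t: "fst (base_change G m) t = D.dm m" "base_change_proj G m t = m"
  using m by (simp_all add: base_change_def base_change_proj_def pb_legs_def)

lemma base_change_proj_ntrans: "ntrans (base_change G m) G (base_change_proj G m)"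
  by (rule ntransI)
    (use base_change_diagram G pb_legs base_change_map in \<open>simp_all add: base_change_proj_def\<close>)

text \<open>Each naturality square of the projection is the left half of a rectangle whose outer part and
  right half are the defining pullbacks at the source and the target.\<close>

lemma base_change_proj_cart: "cart (base_change G m) G (base_change_proj G m)"
proof (rule cartI)
  fix u assume u: "u \<in> A.Ar"
  let ?x = "A.dm u" and ?y = "A.cd u"
  have x: "?x \<in> A.Ob" and y: "?y \<in> A.Ob" using u by simp_all
  have "is_pullback D m (D.cp (snd G (bang ?y)) (snd G u))
      (D.cp (pb_fst G m ?y) (snd (base_change G m) u)) (pb_snd G m ?x)"
    using pb_legs_pullback[OF x] diagram_bang_comp[OF G u] base_change_map[OF u] by simp
  then have "is_pullback D (pb_snd G m ?y) (snd G u) (snd (base_change G m) u) (pb_snd G m ?x)"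
    by (rule D.pullback_cancel[OF pb_legs_pullback[OF y]])
      (use u G pb_legs[OF y] base_change_map[OF u] in simp_all)
  then show "is_pullback D (base_change_proj G m ?y) (snd G u) (snd (base_change G m) u)
      (base_change_proj G m ?x)"
    using x y by (simp add: base_change_proj_def)
qed

end

end

section \<open>The lifted factorization system\<close>

locale functor_category_ofs = functor_category_pullbacks D A t
  for D :: "('oD, 'aD) category" and A :: "('oA, 'aA) category" and t :: 'oA +
  fixes E M :: "'aD set"
  assumes ofs: "is_ofs D E M"
begin

lemma E_sub: "E \<subseteq> D.Ar"
  and M_sub: "M \<subseteq> D.Ar"
  and iso_in_E: "is_iso D f \<Longrightarrow> f \<in> E"
  and iso_in_M: "is_iso D f \<Longrightarrow> f \<in> M"
  and E_comp: "f \<in> E \<Longrightarrow> g \<in> E \<Longrightarrow> D.cd f = D.dm g \<Longrightarrow> D.cp g f \<in> E"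
  and M_comp: "f \<in> M \<Longrightarrow> g \<in> M \<Longrightarrow> D.cd f = D.dm g \<Longrightarrow> D.cp g f \<in> M"
  and orthogonal: "e \<in> E \<Longrightarrow> m \<in> M \<Longrightarrow> f \<in> D.Ar \<Longrightarrow> g \<in> D.Ar \<Longrightarrow>
    D.dm f = D.dm e \<Longrightarrow> D.cd f = D.dm m \<Longrightarrow> D.dm g = D.cd e \<Longrightarrow> D.cd g = D.cd m \<Longrightarrow>
    D.cp g e = D.cp m f \<Longrightarrow>
    \<exists>!d. d \<in> D.Ar \<and> D.dm d = D.cd e \<and> D.cd d = D.dm m \<and> D.cp d e = f \<and> D.cp m d = g"
  and factorization: "h \<in> D.Ar \<Longrightarrow> \<exists>e\<in>E. \<exists>m\<in>M. D.cd e = D.dm m \<and> D.cp m e = h"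
  using ofs unfolding is_ofs_def by blast+

abbreviation "E' \<equiv> lifted_E A D t E"
abbreviation "M' \<equiv> lifted_M A D t M"

lemma lifted_E_iff: "(F, G, \<eta>) \<in> E' \<longleftrightarrow> ntrans F G \<eta> \<and> \<eta> t \<in> E"
  and lifted_M_iff: "(F, G, \<eta>) \<in> M' \<longleftrightarrow> ntrans F G \<eta> \<and> cart F G \<eta> \<and> \<eta> t \<in> M"
  by (simp_all add: lifted_E_def lifted_M_def)

lemma iso_in_lifted:
  assumes iso: "is_iso FC \<tau>"
  shows "\<tau> \<in> E'" "\<tau> \<in> M'"
proof -
  obtain F G \<eta> where \<tau>: "\<tau> = (F, G, \<eta>)" "ntrans F G \<eta>"
    using iso unfolding is_iso_def by (auto elim: FC_arr_cases)
  have "is_iso D (\<eta> x)" if "x \<in> A.Ob" for x using FC_iso_component iso \<tau>(1) that by blast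
  then show "\<tau> \<in> E'" "\<tau> \<in> M'"
    using \<tau> cart_of_isos iso_in_E iso_in_M by (simp_all add: lifted_E_iff lifted_M_iff)
qed

lemma lifted_E_comp:
  assumes "(F, G, \<eta>) \<in> E'" "(G, H, \<theta>) \<in> E'"
  shows "ccomp FC (G, H, \<theta>) (F, G, \<eta>) \<in> E'"
proof -
  have "ntrans F G \<eta>" "ntrans G H \<theta>" "\<eta> t \<in> E" "\<theta> t \<in> E" using assms by (simp_all add: lifted_E_iff)
  then show ?thesis using ntrans_comp E_comp[of "\<eta> t" "\<theta> t"] by (simp add: lifted_E_iff)
qed

lemma lifted_M_comp:
  assumes "(F, G, \<eta>) \<in> M'" "(G, H, \<theta>) \<in> M'"
  shows "ccomp FC (G, H, \<theta>) (F, G, \<eta>) \<in> M'"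
proof -
  have "ntrans F G \<eta>" "ntrans G H \<theta>" "cart F G \<eta>" "cart G H \<theta>" "\<eta> t \<in> M" "\<theta> t \<in> M"
    using assms by (simp_all add: lifted_M_iff)
  then show ?thesis using ntrans_comp cart_comp M_comp[of "\<eta> t" "\<theta> t"] by (simp add: lifted_M_iff)
qed

lemma lifted_orthogonal:
  assumes \<epsilon>: "(F, B, \<epsilon>) \<in> E'" and \<mu>: "(K, L, \<mu>) \<in> M'" and \<phi>: "ntrans F K \<phi>" and \<gamma>: "ntrans B L \<gamma>"
    and square: "ccomp FC (B, L, \<gamma>) (F, B, \<epsilon>) = ccomp FC (K, L, \<mu>) (F, K, \<phi>)"
  shows "\<exists>!d. d \<in> carr FC \<and> cdom FC d = B \<and> ccod FC d = K \<and>
    ccomp FC d (F, B, \<epsilon>) = (F, K, \<phi>) \<and> ccomp FC (K, L, \<mu>) d = (B, L, \<gamma>)"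
proof -
  have \<epsilon>': "ntrans F B \<epsilon>" "\<epsilon> t \<in> E" and \<mu>': "ntrans K L \<mu>" "cart K L \<mu>" "\<mu> t \<in> M"
    using \<epsilon> \<mu> by (simp_all add: lifted_E_iff lifted_M_iff)
  have square': "D.cp (\<gamma> x) (\<epsilon> x) = D.cp (\<mu> x) (\<phi> x)" if "x \<in> A.Ob" for x
    using fun_cong[OF arg_cong[OF square, of "\<lambda>\<tau>. snd (snd \<tau>)"], of x] that by simp
  let ?diagonal = "\<lambda>d. d \<in> D.Ar \<and> D.dm d = fst B t \<and> D.cd d = fst K t \<and>
    D.cp d (\<epsilon> t) = \<phi> t \<and> D.cp (\<mu> t) d = \<gamma> t"
  have "\<exists>!d. d \<in> D.Ar \<and> D.dm d = D.cd (\<epsilon> t) \<and> D.cd d = D.dm (\<mu> t) \<and>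
      D.cp d (\<epsilon> t) = \<phi> t \<and> D.cp (\<mu> t) d = \<gamma> t"
    by (rule orthogonal) (use \<epsilon>' \<mu>' \<phi> \<gamma> square' in simp_all)
  then have diagonal_unique: "\<exists>!d. ?diagonal d" using \<epsilon>' \<mu>' by simp
  then obtain d where d: "d \<in> D.Ar" "D.dm d = fst B t" "D.cd d = fst K t" "D.cp d (\<epsilon> t) = \<phi> t"
    "D.cp (\<mu> t) d = \<gamma> t" by blast
  note \<delta> = cart_lift[OF \<mu>'(1,2) \<gamma> d(1-3,5)]
  let ?\<delta> = "cart_lift B K \<mu> \<gamma> d"
  have right: "ccomp FC (K, L, \<mu>) (B, K, ?\<delta>) = (B, L, \<gamma>)"
    unfolding FC_comp_eq_iff[OF \<gamma>] using \<delta> by simp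
  have left: "ccomp FC (B, K, ?\<delta>) (F, B, \<epsilon>) = (F, K, \<phi>)"
    by (rule cart_lift_precomp[OF \<mu>'(1,2) \<gamma> d(1-3,5) \<epsilon>'(1) \<phi> d(4) square'])
  show ?thesis
  proof (rule ex1I[of _ "(B, K, ?\<delta>)"])
    show "(B, K, ?\<delta>) \<in> carr FC \<and> cdom FC (B, K, ?\<delta>) = B \<and> ccod FC (B, K, ?\<delta>) = K \<and>
        ccomp FC (B, K, ?\<delta>) (F, B, \<epsilon>) = (F, K, \<phi>) \<and> ccomp FC (K, L, \<mu>) (B, K, ?\<delta>) = (B, L, \<gamma>)"
      using \<delta>(1) left right by simp
  next
    fix d' assume d': "d' \<in> carr FC \<and> cdom FC d' = B \<and> ccod FC d' = K \<and>
      ccomp FC d' (F, B, \<epsilon>) = (F, K, \<phi>) \<and> ccomp FC (K, L, \<mu>) d' = (B, L, \<gamma>)"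
    then obtain \<delta>' where \<delta>': "d' = (B, K, \<delta>')" "ntrans B K \<delta>'"
      by (auto elim: FC_arr_cases)
    have \<delta>'_comp: "D.cp (\<delta>' x) (\<epsilon> x) = \<phi> x" "D.cp (\<mu> x) (\<delta>' x) = \<gamma> x" if "x \<in> A.Ob" for x
      using d' \<delta>' FC_comp_eq_iff[OF \<phi>, of B \<delta>' \<epsilon>] FC_comp_eq_iff[OF \<gamma>, of K \<mu> \<delta>'] that by auto
    then have "?diagonal (\<delta>' t)" using \<delta>'(2) \<epsilon>'(1) by simp
    with diagonal_unique d have "\<delta>' t = d" by blast
    then have "?\<delta> = \<delta>'"
      using \<delta>'(2) \<delta>'_comp by (intro cart_lift_unique[OF \<mu>'(1,2) \<gamma> d(1-3,5)]) simp_all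
    then show "d' = (B, K, ?\<delta>)" using \<delta>' by simp
  qed
qed

lemma lifted_factorization:
  assumes \<eta>: "ntrans F G \<eta>"
  shows "\<exists>e\<in>E'. \<exists>m\<in>M'. ccod FC e = cdom FC m \<and> ccomp FC m e = (F, G, \<eta>)"
proof -
  obtain e m where em: "e \<in> E" "m \<in> M" "D.cd e = D.dm m" "D.cp m e = \<eta> t"
    using factorization[of "\<eta> t"] \<eta> by auto
  have G: "diagram G" using ntrans_cod[OF \<eta>] .
  have em_arr: "e \<in> D.Ar" "m \<in> D.Ar" using em E_sub M_sub by auto
  have e: "e \<in> D.Ar" "D.dm e = fst F t" and m: "m \<in> D.Ar" "D.cd m = fst G t"
    using em_arr D.dm_comp[OF em_arr em(3)] D.cd_comp[OF em_arr em(3)] em(4) \<eta> by simp_all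
  note \<pi> = base_change_proj_ntrans[OF G m] base_change_proj_cart[OF G m] base_change_at_t[OF G m]
  note lift = cart_lift[OF \<pi>(1,2) \<eta> e, unfolded \<pi>(3,4), OF em(3,4)]
  let ?e = "(F, base_change G m, cart_lift F (base_change G m) (base_change_proj G m) \<eta> e)"
  have "?e \<in> E'" using lift em by (simp add: lifted_E_iff)
  moreover have "(base_change G m, G, base_change_proj G m) \<in> M'" using \<pi> em by (simp add: lifted_M_iff)
  moreover have "ccomp FC (base_change G m, G, base_change_proj G m) ?e = (F, G, \<eta>)"
    unfolding FC_comp_eq_iff[OF \<eta>] using lift by simp
  ultimately show ?thesis
    by (intro bexI[of _ ?e] bexI[of _ "(base_change G m, G, base_change_proj G m)"]) simp_all
qed

theorem functor_cat_ofs: "is_ofs FC E' M'"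
  unfolding is_ofs_def
proof (intro conjI allI impI ballI)
  show "E' \<subseteq> carr FC" "M' \<subseteq> carr FC" by (auto simp: lifted_E_def lifted_M_def)
next
  fix \<tau> assume "is_iso FC \<tau>"
  then show "\<tau> \<in> E'" "\<tau> \<in> M'" by (fact iso_in_lifted)+
next
  fix \<sigma> \<tau> assume "\<sigma> \<in> E'" "\<tau> \<in> E'" "ccod FC \<sigma> = cdom FC \<tau>"
  then show "ccomp FC \<tau> \<sigma> \<in> E'" by (auto elim: FC_composable_cases intro: lifted_E_comp)
next
  fix \<sigma> \<tau> assume "\<sigma> \<in> M'" "\<tau> \<in> M'" "ccod FC \<sigma> = cdom FC \<tau>"
  then show "ccomp FC \<tau> \<sigma> \<in> M'" by (auto elim: FC_composable_cases intro: lifted_M_comp)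
next
  fix h assume "h \<in> carr FC"
  then obtain F G \<eta> where "h = (F, G, \<eta>)" "ntrans F G \<eta>" by (rule FC_arr_cases)
  then show "\<exists>e\<in>E'. \<exists>m\<in>M'. ccod FC e = cdom FC m \<and> ccomp FC m e = h"
    using lifted_factorization by simp
next
  fix e m f g assume e: "e \<in> E'" and m: "m \<in> M'" and f: "f \<in> carr FC" and g: "g \<in> carr FC"
    and sq: "cdom FC f = cdom FC e \<and> ccod FC f = cdom FC m \<and> cdom FC g = ccod FC e \<and>
      ccod FC g = ccod FC m \<and> ccomp FC g e = ccomp FC m f"
  have ends: "cdom FC f = cdom FC e" "ccod FC f = cdom FC m" "cdom FC g = ccod FC e"
      "ccod FC g = ccod FC m"
    and comm: "ccomp FC g e = ccomp FC m f"
    using sq by blast+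
  obtain F B \<epsilon> K L \<mu> where em: "e = (F, B, \<epsilon>)" "m = (K, L, \<mu>)" by (metis prod_cases3)
  moreover obtain \<phi> \<gamma> where fg: "f = (F, K, \<phi>)" "g = (B, L, \<gamma>)"
    using ends em by (metis FC_dm FC_cd prod_cases3)
  moreover have "\<exists>!d. d \<in> carr FC \<and> cdom FC d = B \<and> ccod FC d = K \<and>
      ccomp FC d (F, B, \<epsilon>) = (F, K, \<phi>) \<and> ccomp FC (K, L, \<mu>) d = (B, L, \<gamma>)"
    by (rule lifted_orthogonal) (use e m f g comm em fg in simp_all)
  ultimately show "\<exists>!d. d \<in> carr FC \<and> cdom FC d = ccod FC e \<and> ccod FC d = cdom FC m \<and>
      ccomp FC d e = f \<and> ccomp FC m d = g"
    by simp
qed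
end

section \<open>Slices over a diagram and over its value at \<open>t\<close>\<close>

type_synonym ('oA, 'aA, 'oD, 'aD) FC_slice_obj =
  "('oA, 'aA, 'oD, 'aD) functor_rep \<times> ('oA, 'aA, 'oD, 'aD) nat_rep"
type_synonym ('oA, 'aA, 'oD, 'aD) FC_slice_arr =
  "('oA, 'aA, 'oD, 'aD) FC_slice_obj \<times> ('oA, 'aA, 'oD, 'aD) FC_slice_obj \<times> ('oA, 'aA, 'oD, 'aD) nat_rep"

locale functor_category_slices = functor_category_pullbacks D A t
  for D :: "('oD, 'aD) category" and A :: "('oA, 'aA) category" and t :: 'oA +
  fixes M :: "'aD set"
  assumes M_arr: "M \<subseteq> D.Ar"
begin

abbreviation "M' \<equiv> lifted_M A D t M"
abbreviation "FC_slice G \<equiv> slice FC M' G"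
abbreviation "D_slice G \<equiv> slice D M (fst G t)"

definition eval_obj :: "('oA, 'aA, 'oD, 'aD) FC_slice_obj \<Rightarrow> 'oD \<times> 'aD" where
  "eval_obj = (\<lambda>(S, _, _, \<sigma>). (fst S t, \<sigma> t))"

definition eval_arr :: "('oA, 'aA, 'oD, 'aD) FC_slice_arr \<Rightarrow> ('oD \<times> 'aD) \<times> ('oD \<times> 'aD) \<times> 'aD" where
  "eval_arr = (\<lambda>(a, b, _, _, \<phi>). (eval_obj a, eval_obj b, \<phi> t))"

definition base_change_obj ::
  "('oA, 'aA, 'oD, 'aD) functor_rep \<Rightarrow> 'oD \<times> 'aD \<Rightarrow> ('oA, 'aA, 'oD, 'aD) FC_slice_obj" where
  "base_change_obj G = (\<lambda>(_, m). (base_change G m, base_change G m, G, base_change_proj G m))"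

definition base_change_arr ::
  "('oA, 'aA, 'oD, 'aD) functor_rep \<Rightarrow> ('oD \<times> 'aD) \<times> ('oD \<times> 'aD) \<times> 'aD \<Rightarrow>
     ('oA, 'aA, 'oD, 'aD) FC_slice_arr" where
  "base_change_arr G = (\<lambda>((K, m), (K', m'), f).
     (base_change_obj G (K, m), base_change_obj G (K', m'), base_change G m, base_change G m',
      cart_lift (base_change G m) (base_change G m') (base_change_proj G m') (base_change_proj G m) f))"

definition slice_unit ::
  "('oA, 'aA, 'oD, 'aD) functor_rep \<Rightarrow> ('oA, 'aA, 'oD, 'aD) FC_slice_obj \<Rightarrow>
     ('oA, 'aA, 'oD, 'aD) FC_slice_arr" where
  "slice_unit G = (\<lambda>(S, S', G', \<sigma>).
     ((S, S', G', \<sigma>), base_change_obj G (fst S t, \<sigma> t), S, base_change G (\<sigma> t),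
      cart_lift S (base_change G (\<sigma> t)) (base_change_proj G (\<sigma> t)) \<sigma> (D.idc (fst S t))))"

lemma eval_obj [simp]: "eval_obj (S, S', G', \<sigma>) = (fst S t, \<sigma> t)"
  and eval_arr [simp]: "eval_arr (a, b, S, S', \<phi>) = (eval_obj a, eval_obj b, \<phi> t)"
  and base_change_obj [simp]:
    "base_change_obj G (K, m) = (base_change G m, base_change G m, G, base_change_proj G m)"
  and base_change_arr [simp]: "base_change_arr G ((K, m), (K', m'), f) =
    (base_change_obj G (K, m), base_change_obj G (K', m'), base_change G m, base_change G m',
     cart_lift (base_change G m) (base_change G m') (base_change_proj G m') (base_change_proj G m) f)"
  and slice_unit [simp]: "slice_unit G (S, S', G', \<sigma>) =
    ((S, S', G', \<sigma>), base_change_obj G (fst S t, \<sigma> t), S, base_change G (\<sigma> t),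
     cart_lift S (base_change G (\<sigma> t)) (base_change_proj G (\<sigma> t)) \<sigma> (D.idc (fst S t)))"
  by (simp_all add: eval_obj_def eval_arr_def base_change_obj_def base_change_arr_def slice_unit_def)

context
  fixes G
  assumes G: "diagram G"
begin

lemma FC_slice_objE:
  assumes "x \<in> cobj (FC_slice G)"
  obtains S \<sigma> where "x = (S, S, G, \<sigma>)" "ntrans S G \<sigma>" "cart S G \<sigma>" "\<sigma> t \<in> M"
  using assms by (cases x) (auto simp: slice_obj_iff lifted_M_def)

lemma FC_slice_arr_iff:
  "((S, S\<^sub>1, G\<^sub>1, \<sigma>), (S', S\<^sub>1', G\<^sub>1', \<sigma>'), S\<^sub>2, S\<^sub>2', \<phi>) \<in> carr (FC_slice G) \<longleftrightarrow>
     S\<^sub>1 = S \<and> G\<^sub>1 = G \<and> S\<^sub>1' = S' \<and> G\<^sub>1' = G \<and> S\<^sub>2 = S \<and> S\<^sub>2' = S' \<and>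
     ntrans S G \<sigma> \<and> cart S G \<sigma> \<and> \<sigma> t \<in> M \<and> ntrans S' G \<sigma>' \<and> cart S' G \<sigma>' \<and> \<sigma>' t \<in> M \<and>
     ntrans S S' \<phi> \<and> (\<forall>x\<in>A.Ob. D.cp (\<sigma>' x) (\<phi> x) = \<sigma> x)"
  by (auto simp: slice_arr_iff lifted_M_def fun_eq_iff ntrans_undefined)

lemma FC_slice_arrE:
  assumes "f \<in> carr (FC_slice G)"
  obtains S \<sigma> S' \<sigma>' \<phi> where "f = ((S, S, G, \<sigma>), (S', S', G, \<sigma>'), S, S', \<phi>)"
    "ntrans S G \<sigma>" "cart S G \<sigma>" "\<sigma> t \<in> M" "ntrans S' G \<sigma>'" "cart S' G \<sigma>'" "\<sigma>' t \<in> M"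
    "ntrans S S' \<phi>" "\<And>x. x \<in> A.Ob \<Longrightarrow> D.cp (\<sigma>' x) (\<phi> x) = \<sigma> x"
proof -
  obtain S S\<^sub>1 G\<^sub>1 \<sigma> S' S\<^sub>1' G\<^sub>1' \<sigma>' S\<^sub>2 S\<^sub>2' \<phi> where
    "f = ((S, S\<^sub>1, G\<^sub>1, \<sigma>), (S', S\<^sub>1', G\<^sub>1', \<sigma>'), S\<^sub>2, S\<^sub>2', \<phi>)"
    by (metis prod_cases3 prod.exhaust)
  then show ?thesis using assms that by (auto simp: FC_slice_arr_iff)
qed

lemma D_slice_obj_iff: "(K, m) \<in> cobj (D_slice G) \<longleftrightarrow> m \<in> M \<and> D.dm m = K \<and> D.cd m = fst G t"
  by (simp add: slice_obj_iff)

lemma base_change_in_M':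
  assumes "(K, m) \<in> cobj (D_slice G)"
  shows "ntrans (base_change G m) G (base_change_proj G m)"
    "cart (base_change G m) G (base_change_proj G m)"
    "fst (base_change G m) t = K" "base_change_proj G m t = m"
proof -
  have m: "m \<in> D.Ar" "D.cd m = fst G t" "D.dm m = K"
    using assms M_arr by (auto simp: D_slice_obj_iff)
  show "ntrans (base_change G m) G (base_change_proj G m)"
    "cart (base_change G m) G (base_change_proj G m)"
    "fst (base_change G m) t = K" "base_change_proj G m t = m"
    using base_change_proj_ntrans[OF G m(1,2)] base_change_proj_cart[OF G m(1,2)]
      base_change_at_t[OF G m(1,2)] m(3) by simp_all
qed

lemma base_change_obj_in_FC_slice:
  "x \<in> cobj (D_slice G) \<Longrightarrow> base_change_obj G x \<in> cobj (FC_slice G)"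
  using base_change_in_M' by (cases x) (auto simp: slice_obj_iff lifted_M_def D_slice_obj_iff)

lemma eval_base_change_obj: "x \<in> cobj (D_slice G) \<Longrightarrow> eval_obj (base_change_obj G x) = x"
  using base_change_in_M' by (cases x) simp

lemma D_slice_arr_lift_conditions:
  assumes "((K, m), (K', m'), f) \<in> carr (D_slice G)"
  shows "(K, m) \<in> cobj (D_slice G)" "(K', m') \<in> cobj (D_slice G)"
    "f \<in> D.Ar" "D.dm f = fst (base_change G m) t" "D.cd f = fst (base_change G m') t"
    "D.cp (base_change_proj G m' t) f = base_change_proj G m t"
proof -
  show obj: "(K, m) \<in> cobj (D_slice G)" "(K', m') \<in> cobj (D_slice G)"
    using assms by (simp_all add: slice_arr_iff slice_obj_iff)
  show "f \<in> D.Ar" "D.dm f = fst (base_change G m) t" "D.cd f = fst (base_change G m') t"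
    "D.cp (base_change_proj G m' t) f = base_change_proj G m t"
    using assms base_change_in_M'[OF obj(1)] base_change_in_M'[OF obj(2)]
    by (simp_all add: slice_arr_iff)
qed

lemma base_change_arr_in_FC_slice:
  assumes f: "f \<in> carr (D_slice G)"
  shows "base_change_arr G f \<in> carr (FC_slice G)" "eval_arr (base_change_arr G f) = f"
proof -
  obtain K m K' m' \<phi> where f': "f = ((K, m), (K', m'), \<phi>)" by (metis prod.exhaust)
  note c = D_slice_arr_lift_conditions[OF f[unfolded f']]
  note bc = base_change_in_M'[OF c(1)] and bc' = base_change_in_M'[OF c(2)]
  note l = cart_lift[OF bc'(1,2) bc(1) c(3-6)]
  show "base_change_arr G f \<in> carr (FC_slice G)"
    using l bc bc' c(1,2) unfolding f' by (simp add: FC_slice_arr_iff D_slice_obj_iff)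
  show "eval_arr (base_change_arr G f) = f"
    using l(2) bc bc' unfolding f' by simp
qed

lemma eval_functor: "functor_maps (FC_slice G) (D_slice G) eval_obj eval_arr"
  unfolding functor_maps_def
proof (intro conjI ballI impI)
  fix x assume "x \<in> cobj (FC_slice G)"
  then obtain S \<sigma> where x: "x = (S, S, G, \<sigma>)" "ntrans S G \<sigma>" "\<sigma> t \<in> M"
    by (auto elim: FC_slice_objE)
  then show "eval_obj x \<in> cobj (D_slice G)" by (simp add: D_slice_obj_iff)
  show "eval_arr (cid (FC_slice G) x) = cid (D_slice G) (eval_obj x)"
    using x ntrans_dom[OF x(2)] by (simp add: FC_id)
next
  fix f assume "f \<in> carr (FC_slice G)"
  then obtain S \<sigma> S' \<sigma>' \<phi> where f: "f = ((S, S, G, \<sigma>), (S', S', G, \<sigma>'), S, S', \<phi>)"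
    "ntrans S G \<sigma>" "\<sigma> t \<in> M" "ntrans S' G \<sigma>'" "\<sigma>' t \<in> M" "ntrans S S' \<phi>"
    "\<And>x. x \<in> A.Ob \<Longrightarrow> D.cp (\<sigma>' x) (\<phi> x) = \<sigma> x"
    by (elim FC_slice_arrE) blast
  then show "eval_arr f \<in> carr (D_slice G)"
    "cdom (D_slice G) (eval_arr f) = eval_obj (cdom (FC_slice G) f)"
    "ccod (D_slice G) (eval_arr f) = eval_obj (ccod (FC_slice G) f)"
    by (simp_all add: slice_arr_iff)
next
  fix f g assume "f \<in> carr (FC_slice G)" "g \<in> carr (FC_slice G)"
    "ccod (FC_slice G) f = cdom (FC_slice G) g"
  then show "eval_arr (ccomp (FC_slice G) g f) = ccomp (D_slice G) (eval_arr g) (eval_arr f)"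
    by (auto elim!: FC_slice_arrE)
qed

lemma base_change_functor:
  "functor_maps (D_slice G) (FC_slice G) (base_change_obj G) (base_change_arr G)"
  unfolding functor_maps_def
proof (intro conjI ballI impI)
  fix x assume x: "x \<in> cobj (D_slice G)"
  then show "base_change_obj G x \<in> cobj (FC_slice G)" by (rule base_change_obj_in_FC_slice)
  obtain K m where x': "x = (K, m)" by (rule prod.exhaust)
  note bc = base_change_in_M'[OF x[unfolded x']]
  show "base_change_arr G (cid (D_slice G) x) = cid (FC_slice G) (base_change_obj G x)"
    using cart_lift_id[OF bc(1,2)] bc(3) unfolding x' by simp
next
  fix f assume "f \<in> carr (D_slice G)"
  then show "base_change_arr G f \<in> carr (FC_slice G)" by (rule base_change_arr_in_FC_slice)
  obtain K m K' m' \<phi> where "f = ((K, m), (K', m'), \<phi>)" by (metis prod.exhaust)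
  then show "cdom (FC_slice G) (base_change_arr G f) = base_change_obj G (cdom (D_slice G) f)"
    "ccod (FC_slice G) (base_change_arr G f) = base_change_obj G (ccod (D_slice G) f)"
    by simp_all
next
  fix f g assume f: "f \<in> carr (D_slice G)" and g: "g \<in> carr (D_slice G)"
    and fg: "ccod (D_slice G) f = cdom (D_slice G) g"
  obtain K m K' m' \<phi> where f': "f = ((K, m), (K', m'), \<phi>)" by (metis prod.exhaust)
  obtain K'' m'' \<psi> where g': "g = ((K', m'), (K'', m''), \<psi>)"
    using fg f' by (metis prod.exhaust slice_cd slice_dm)
  note c = D_slice_arr_lift_conditions[OF f[unfolded f']]
    and c' = D_slice_arr_lift_conditions[OF g[unfolded g']]
  note bc = base_change_in_M'[OF c(1)] and bc' = base_change_in_M'[OF c(2)]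
    and bc'' = base_change_in_M'[OF c'(2)]
  show "base_change_arr G (ccomp (D_slice G) g f) =
      ccomp (FC_slice G) (base_change_arr G g) (base_change_arr G f)"
    using cart_lift_comp[OF bc'(1,2) bc''(1,2) bc(1) c(3-6) c'(3-6)] unfolding f' g' by simp
qed

lemma slice_counit_iso:
  "nat_iso_maps (D_slice G) (D_slice G) (eval_obj \<circ> base_change_obj G) (eval_arr \<circ> base_change_arr G)
     (\<lambda>x. x) (\<lambda>f. f) (cid (D_slice G))"
  unfolding nat_iso_maps_def nat_trans_maps_def
proof (intro conjI ballI)
  fix x assume x: "x \<in> cobj (D_slice G)"
  obtain K m where x': "x = (K, m)" by (rule prod.exhaust)
  have m: "m \<in> M" "m \<in> D.Ar" "D.dm m = K" "D.cd m = fst G t"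
    using x M_arr unfolding x' by (auto simp: D_slice_obj_iff)
  show "cid (D_slice G) x \<in> carr (D_slice G)"
    using m D.dm_in_Ob[of m] unfolding x' by (simp add: slice_arr_iff)
  show "cdom (D_slice G) (cid (D_slice G) x) = (eval_obj \<circ> base_change_obj G) x"
    "ccod (D_slice G) (cid (D_slice G) x) = x"
    using eval_base_change_obj[OF x] unfolding x' by simp_all
  show "is_iso (D_slice G) (cid (D_slice G) x)"
    using D.slice_id_iso[OF x[unfolded x'] M_arr] unfolding x' .
next
  fix f assume f: "f \<in> carr (D_slice G)"
  obtain K m K' m' \<phi> where f': "f = ((K, m), (K', m'), \<phi>)" by (metis prod.exhaust)
  have "\<phi> \<in> D.Ar" "D.dm \<phi> = K" "D.cd \<phi> = K'" using f unfolding f' by (simp_all add: slice_arr_iff)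
  then show "ccomp (D_slice G) (cid (D_slice G) (ccod (D_slice G) f))
      ((eval_arr \<circ> base_change_arr G) f) = ccomp (D_slice G) f (cid (D_slice G) (cdom (D_slice G) f))"
    using base_change_arr_in_FC_slice(2)[OF f] unfolding f' by simp
qed

text \<open>The unit at \<open>(S, \<sigma>)\<close> compares the two cartesian transformations \<open>\<sigma>\<close> and the base change
  projection along \<open>\<sigma> t\<close>, which have the same component at \<open>t\<close>; lifting each through the other
  gives mutually inverse transformations.\<close>

lemma slice_unit_component:
  assumes x: "x \<in> cobj (FC_slice G)"
  shows "slice_unit G x \<in> carr (FC_slice G)" "is_iso (FC_slice G) (slice_unit G x)"
proof -
  obtain S \<sigma> where x': "x = (S, S, G, \<sigma>)" and \<sigma>: "ntrans S G \<sigma>" "cart S G \<sigma>" "\<sigma> t \<in> M"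
    using x by (rule FC_slice_objE)
  have S: "diagram S" using ntrans_dom[OF \<sigma>(1)] .
  have "(fst S t, \<sigma> t) \<in> cobj (D_slice G)" using \<sigma> by (simp add: D_slice_obj_iff)
  note bc = base_change_in_M'[OF this]
  let ?P = "base_change G (\<sigma> t)" and ?q = "base_change_proj G (\<sigma> t)" and ?i = "D.idc (fst S t)"
  have i: "?i \<in> D.Ar" "D.dm ?i = fst S t" "D.cd ?i = fst S t" "D.dm ?i = fst ?P t"
    "D.cd ?i = fst ?P t" "D.cp (?q t) ?i = \<sigma> t" "D.cp (\<sigma> t) ?i = ?q t"
    using S bc(3,4) \<sigma>(1) by simp_all
  note l = cart_lift[OF bc(1,2) \<sigma>(1) i(1,2,5,6)] and l' = cart_lift[OF \<sigma>(1,2) bc(1) i(1,4,3,7)]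
  show unit: "slice_unit G x \<in> carr (FC_slice G)"
    using l \<sigma> bc i unfolding x' by (simp add: FC_slice_arr_iff)
  let ?inv = "(base_change_obj G (eval_obj x), x, ?P, S, cart_lift ?P S \<sigma> ?q ?i)"
  show "is_iso (FC_slice G) (slice_unit G x)"
    unfolding is_iso_def
  proof (intro conjI bexI[of _ ?inv])
    show "?inv \<in> carr (FC_slice G)"
      using l' \<sigma> bc i unfolding x' by (simp add: FC_slice_arr_iff)
    show "ccomp (FC_slice G) ?inv (slice_unit G x) =
        cid (FC_slice G) (cdom (FC_slice G) (slice_unit G x))"
      using cart_lift_comp[OF bc(1,2) \<sigma>(1,2) \<sigma>(1) i(1,2,5,6) i(1,4,3,7)]
        cart_lift_id[OF \<sigma>(1,2)] i unfolding x' by simp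
    show "ccomp (FC_slice G) (slice_unit G x) ?inv =
        cid (FC_slice G) (ccod (FC_slice G) (slice_unit G x))"
      using cart_lift_comp[OF \<sigma>(1,2) bc(1,2) bc(1) i(1,4,3,7) i(1,2,5,6)]
        cart_lift_id[OF bc(1,2)] i bc(3) unfolding x' by simp
  qed (use unit in \<open>simp_all add: x'\<close>)
qed

lemma slice_unit_natural:
  assumes "f \<in> carr (FC_slice G)"
  shows "ccomp (FC_slice G) (slice_unit G (ccod (FC_slice G) f)) f =
    ccomp (FC_slice G) ((base_change_arr G \<circ> eval_arr) f) (slice_unit G (cdom (FC_slice G) f))"
proof -
  obtain S \<sigma> S' \<sigma>' \<phi> where f: "f = ((S, S, G, \<sigma>), (S', S', G, \<sigma>'), S, S', \<phi>)"
    and \<sigma>: "ntrans S G \<sigma>" "cart S G \<sigma>" "\<sigma> t \<in> M"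
    and \<sigma>': "ntrans S' G \<sigma>'" "cart S' G \<sigma>'" "\<sigma>' t \<in> M"
    and \<phi>: "ntrans S S' \<phi>" "\<And>x. x \<in> A.Ob \<Longrightarrow> D.cp (\<sigma>' x) (\<phi> x) = \<sigma> x"
    using assms by (elim FC_slice_arrE) blast
  have S: "diagram S" and S': "diagram S'" using ntrans_dom \<sigma>(1) \<sigma>'(1) by blast+
  have "(fst S t, \<sigma> t) \<in> cobj (D_slice G)" "(fst S' t, \<sigma>' t) \<in> cobj (D_slice G)"
    using \<sigma> \<sigma>' by (simp_all add: D_slice_obj_iff)
  note bc = base_change_in_M'[OF this(1)] and bc' = base_change_in_M'[OF this(2)]
  let ?i = "D.idc (fst S t)" and ?i' = "D.idc (fst S' t)"
    and ?q = "base_change_proj G (\<sigma> t)" and ?q' = "base_change_proj G (\<sigma>' t)"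
    and ?P = "base_change G (\<sigma> t)" and ?P' = "base_change G (\<sigma>' t)"
  have i: "?i \<in> D.Ar" "D.dm ?i = fst S t" "D.cd ?i = fst ?P t" "D.cp (?q t) ?i = \<sigma> t"
    and i': "?i' \<in> D.Ar" "D.dm ?i' = fst S' t" "D.cd ?i' = fst ?P' t" "D.cp (?q' t) ?i' = \<sigma>' t"
    using S S' bc bc' \<sigma>(1) \<sigma>'(1) by simp_all
  have \<phi>t: "\<phi> t \<in> D.Ar" "D.dm (\<phi> t) = fst S t" "D.cd (\<phi> t) = fst S' t" "D.cp (\<sigma>' t) (\<phi> t) = \<sigma> t"
    and \<phi>P: "D.dm (\<phi> t) = fst ?P t" "D.cd (\<phi> t) = fst ?P' t" "D.cp (?q' t) (\<phi> t) = ?q t"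
    using \<phi> bc bc' by simp_all
  have "cart_lift S S' \<sigma>' \<sigma> (\<phi> t) = \<phi>"
    by (rule cart_lift_unique[OF \<sigma>'(1,2) \<sigma>(1) \<phi>t \<phi>(1) refl \<phi>(2)])
  then show ?thesis
    using cart_lift_comp[OF \<sigma>'(1,2) bc'(1,2) \<sigma>(1) \<phi>t i']
      cart_lift_comp[OF bc(1,2) bc'(1,2) \<sigma>(1) i \<phi>t(1) \<phi>P] \<phi>t i i'
    unfolding f by simp
qed

lemma slice_unit_iso:
  "nat_iso_maps (FC_slice G) (FC_slice G) (\<lambda>x. x) (\<lambda>f. f) (base_change_obj G \<circ> eval_obj)
     (base_change_arr G \<circ> eval_arr) (slice_unit G)"
  unfolding nat_iso_maps_def nat_trans_maps_def
proof (intro conjI ballI)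
  fix x assume "x \<in> cobj (FC_slice G)"
  then show "slice_unit G x \<in> carr (FC_slice G)" "is_iso (FC_slice G) (slice_unit G x)"
    "cdom (FC_slice G) (slice_unit G x) = x"
    "ccod (FC_slice G) (slice_unit G x) = (base_change_obj G \<circ> eval_obj) x"
    using slice_unit_component by (auto elim: FC_slice_objE)
qed (fact slice_unit_natural)

theorem slices_equivalent: "equivalent_categories (FC_slice G) (D_slice G)"
  unfolding equivalent_categories_def
  using eval_functor base_change_functor slice_unit_iso slice_counit_iso by blast

end

end

theorem lemma4p2:
  fixes D :: "('oD, 'aD) category" and A :: "('oA, 'aA) category"
    and E M :: "'aD set" and t :: 'oA
  assumes "is_category D" and "has_pullbacks D" and "is_ofs D E M"
    and "is_category A" and "is_terminal A t"
  shows "is_ofs (functor_cat A D) (lifted_E A D t E) (lifted_M A D t M) \<and>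
         (\<forall>G\<in>cobj (functor_cat A D).
            equivalent_categories (slice (functor_cat A D) (lifted_M A D t M) G)
                                  (slice D M (fst G t)))"
proof -
  interpret ofs: functor_category_ofs D A t E M
    by unfold_locales (fact assms)+
  interpret slices: functor_category_slices D A t M
    by unfold_locales (fact ofs.M_sub)
  show ?thesis
    using ofs.functor_cat_ofs slices.slices_equivalent by simp
qed

end
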